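(* For every $\varepsilon>0$ and every $f\in C_\lambda(I)$ there exist $\delta<\varepsilon/2$ and $F\in C_\lambda(I)$ such that: (1) $F$ is piecewise affine and $\rho(f,F)<\varepsilon/2$; (2) if $g\in C_\lambda(I)$ and $\rho(F,g)<\delta$, then every $\delta$-pseudo orbit $\mathbf{x}=(x_i)_{i\ge0}$ of $g$ is $\varepsilon$-traced by some point $z\in I$ (i.e. $|g^i(z)-x_i|<\varepsilon$ for all $i\ge0$); moreover, if $\mathbf{x}$ is a periodic sequence, then $z$ can be chosen to be a periodic point of $g$.
   Context: $I=[0,1]$, $\lambda$ Lebesgue measure; $C_\lambda(I)$ is the set of continuous $\lambda$-preserving maps $I\to I$, with uniform metric $\rho(f,g)=\sup_x|f(x)-g(x)|$. Piecewise affine means: affine on each interval of monotonicity, with only finitely many points having no neighborhood on which the map has constant slope. A $\delta$-pseudo orbit of $g$ is a sequence $(x_i)_{i\ge0}$ with $|g(x_i)-x_{i+1}|<\delta$ for all $i$; it is periodic if $x_{i+N}=x_i$ for some $N\ge1$ and all $i$. *)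

theory Defs
  imports "HOL-Analysis.Analysis"
begin

definition I01 :: "real set" where "I01 = {0..1}"

definition C_lambda :: "(real \<Rightarrow> real) set" where
  "C_lambda = {f. continuous_on I01 f \<and> f ` I01 \<subseteq> I01 \<and>
      (\<forall>A \<in> sets borel. A \<subseteq> I01 \<longrightarrow>
         emeasure lborel {x \<in> I01. f x \<in> A} = emeasure lborel A)}"

definition rho :: "(real \<Rightarrow> real) \<Rightarrow> (real \<Rightarrow> real) \<Rightarrow> real" where
  "rho f g = (SUP x \<in> I01. \<bar>f x - g x\<bar>)"

definition piecewise_affine :: "(real \<Rightarrow> real) \<Rightarrow> bool" where
  "piecewise_affine f \<longleftrightarrow> (\<exists>S. finite S \<and>
     (\<forall>x \<in> I01 - S. \<exists>e>0. \<exists>a b. \<forall>y \<in> I01. \<bar>y - x\<bar> < e \<longrightarrow> f y = a * y + b))"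

definition pseudo_orbit :: "(real \<Rightarrow> real) \<Rightarrow> real \<Rightarrow> (nat \<Rightarrow> real) \<Rightarrow> bool" where
  "pseudo_orbit g \<delta> xs \<longleftrightarrow> (\<forall>i. xs i \<in> I01) \<and> (\<forall>i. \<bar>g (xs i) - xs (Suc i)\<bar> < \<delta>)"

definition periodic_seq :: "(nat \<Rightarrow> real) \<Rightarrow> bool" where
  "periodic_seq xs \<longleftrightarrow> (\<exists>N\<ge>1. \<forall>i. xs (i + N) = xs i)"

definition traces :: "(real \<Rightarrow> real) \<Rightarrow> real \<Rightarrow> real \<Rightarrow> (nat \<Rightarrow> real) \<Rightarrow> bool" where
  "traces g \<epsilon> z xs \<longleftrightarrow> (\<forall>i. \<bar>(g ^^ i) z - xs i\<bar> < \<epsilon>)"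

definition periodic_point :: "(real \<Rightarrow> real) \<Rightarrow> real \<Rightarrow> bool" where
  "periodic_point g z \<longleftrightarrow> (\<exists>n\<ge>1. (g ^^ n) z = z)"

end

theory Submission
  imports Defs
begin

(*
  Cut [0,1] into n cells H j of length h = 1/n and record how f distributes their mass:
  A k j = n * lambda(H k \<inter> f^-1(H j)) is doubly stochastic, and by the intermediate value theorem
  the cells hit with positive mass by cell k form an interval. Multiplying by the symmetric doubly
  stochastic band matrix T (entries 1/5 for |i - j| \<le> 2) gives a doubly stochastic B = A T whose
  row supports {P k..Q k} are intervals that contain, with a margin of one cell, the grid points
  near f(k h) and f((k+1) h). On the k-th cell, F zigzags affinely from the grid point near f(k h)
  down to P k * h, up to (Q k + 1) * h and back to the grid point near f((k+1) h), spending total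
  time B k j * h in cell j; as the columns of B sum to 1, F preserves lambda, and F is within
  3 h + omega_f(h) of f.

  F crosses every cell of its row support completely, so a map g that is uniformly delta-close to F
  maps the core of cell k (the cell shrunk by eta at both ends) over the core of every cell in
  {P k..Q k}. A delta-pseudo orbit therefore determines a chain of cores, each covered by the image
  of the previous one; a nested intersection of compact sets yields a tracing point, and for a
  periodic pseudo orbit the chain is eventually periodic, so a fixed point of an iterate of g on a
  subinterval yields a periodic tracing point.
*)

lemma I01_borel [simp]: "I01 \<in> sets borel"
  by (simp add: I01_def)

lemma emeasure_lborel_affine_vimage:
  fixes c t :: real
  assumes "c \<noteq> 0" and S: "S \<in> sets borel"
  shows "emeasure lborel S = ennreal \<bar>c\<bar> * emeasure lborel {x. t + c * x \<in> S}"
proof -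
  have "emeasure lborel S = emeasure (density (distr lborel borel (\<lambda>x. t + c * x)) (\<lambda>_. ennreal \<bar>c\<bar>)) S"
    using lborel_real_affine[OF assms(1), of t] by simp
  also have "\<dots> = (\<integral>\<^sup>+x\<in>S. ennreal \<bar>c\<bar> \<partial>(distr lborel borel (\<lambda>x. t + c * x)))"
    using S by (simp add: emeasure_density)
  also have "\<dots> = ennreal \<bar>c\<bar> * emeasure (distr lborel borel (\<lambda>x. t + c * x)) S"
    using S by (simp add: nn_integral_cmult_indicator)
  also have "\<dots> = ennreal \<bar>c\<bar> * emeasure lborel {x. t + c * x \<in> S}"
    using S by (simp add: emeasure_distr vimage_def)
  finally show ?thesis .
qed

lemma sets_borel_vimage_I01:
  assumes "continuous_on I01 f" "S \<in> sets borel"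
  shows "{x \<in> I01. f x \<in> S} \<in> sets borel"
proof -
  define fc where "fc x = f (max 0 (min 1 x))" for x :: real
  have "continuous_on UNIV (\<lambda>x::real. max 0 (min 1 x))" by (intro continuous_intros)
  moreover have "(\<lambda>x::real. max 0 (min 1 x)) ` UNIV \<subseteq> I01" by (auto simp: I01_def)
  ultimately have "continuous_on UNIV fc"
    unfolding fc_def using continuous_on_compose2[OF assms(1)] by blast
  hence "fc \<in> borel_measurable borel" by (rule borel_measurable_continuous_onI)
  hence "fc -` S \<inter> space borel \<in> sets borel" using assms(2) by (rule measurable_sets)
  moreover have "{x \<in> I01. f x \<in> S} = I01 \<inter> (fc -` S \<inter> space borel)"
    by (auto simp: fc_def I01_def)
  ultimately show ?thesis by auto
qed

lemma emeasure_Int_eq_of_Diff_subset_singleton: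
  assumes "E \<in> sets borel" "S \<in> sets borel" "E - S \<subseteq> {p}"
  shows "emeasure lborel (E \<inter> S) = emeasure lborel E"
proof -
  have "E - S \<in> null_sets lborel"
    by (rule null_sets_subset[OF finite_imp_null_set_lborel[of "{p}"]]) (use assms in auto)
  moreover have "E \<inter> S = E - (E - S)" by auto
  ultimately show ?thesis using emeasure_Diff_null_set[of "E - S" lborel E] assms by simp
qed

lemma convex_combination_between_min_max:
  fixes a b \<theta> :: real
  assumes "0 \<le> \<theta>" "\<theta> \<le> 1"
  shows "min a b \<le> a + (b - a) * \<theta> \<and> a + (b - a) * \<theta> \<le> max a b"
proof -
  have "a + (b - a) * \<theta> = (1 - \<theta>) * a + \<theta> * b" by (simp add: algebra_simps)
  moreover have "(1 - \<theta>) * min a b + \<theta> * min a b \<le> (1 - \<theta>) * a + \<theta> * b"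
    using assms by (intro add_mono mult_left_mono) auto
  moreover have "(1 - \<theta>) * a + \<theta> * b \<le> (1 - \<theta>) * max a b + \<theta> * max a b"
    using assms by (intro add_mono mult_left_mono) auto
  ultimately show ?thesis by (simp add: algebra_simps)
qed

lemma sum_list_map_eq_sum_count_of_nat:
  fixes f :: "'b \<Rightarrow> 'a::comm_semiring_1"
  shows "sum_list (map f xs) = (\<Sum>x\<in>set xs. of_nat (count_list xs x) * f x)"
proof (induction xs)
  case (Cons x xs)
  have e: "(\<Sum>y\<in>set (x#xs). of_nat (count_list (x#xs) y) * f y)
      = (\<Sum>y\<in>insert x (set xs). of_nat (count_list xs y) * f y + (if x = y then f y else 0))"
    by (rule sum.cong) (auto simp: algebra_simps)
  show ?case
  proof (cases "x \<in> set xs")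
    case True
    hence i: "insert x (set xs) = set xs" by auto
    have "(\<Sum>y\<in>set xs. of_nat (count_list xs y) * f y + (if x = y then f y else 0))
       = (\<Sum>y\<in>set xs. of_nat (count_list xs y) * f y) + f x"
      using True by (simp add: sum.distrib sum.delta)
    then show ?thesis using e Cons i by (simp add: add.commute)
  next
    case False
    have c0: "count_list xs x = 0" using False by (simp add: count_list_0_iff)
    have "(\<Sum>y\<in>insert x (set xs). of_nat (count_list xs y) * f y + (if x = y then f y else 0))
       = (\<Sum>y\<in>set xs. of_nat (count_list xs y) * f y) + f x"
      using False c0 by (simp add: sum.distrib sum.delta)
    then show ?thesis using e Cons by (simp add: add.commute)
  qed
qed simp

lemma abs_diff_le_rho:
  assumes "f ` I01 \<subseteq> I01" "g ` I01 \<subseteq> I01" "x \<in> I01"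
  shows "\<bar>f x - g x\<bar> \<le> rho f g"
proof -
  have "bdd_above ((\<lambda>x. \<bar>f x - g x\<bar>) ` I01)"
  proof (rule bdd_aboveI2)
    fix y assume "y \<in> I01"
    then show "\<bar>f y - g y\<bar> \<le> 1" using assms(1,2) by (force simp: I01_def)
  qed
  then show ?thesis unfolding rho_def using assms(3) by (intro cSUP_upper)
qed

lemma rho_le:
  assumes "\<And>x. x \<in> I01 \<Longrightarrow> \<bar>f x - g x\<bar> \<le> c"
  shows "rho f g \<le> c"
  unfolding rho_def by (rule cSUP_least) (use assms in \<open>auto simp: I01_def\<close>)

lemma exists_fine_grid:
  fixes f :: "real \<Rightarrow> real"
  assumes "uniformly_continuous_on I01 f" "0 < c" "0 < e"
  obtains n :: nat where "n \<ge> 2" "1 / real n \<le> c"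
    "\<And>x y. x \<in> I01 \<Longrightarrow> y \<in> I01 \<Longrightarrow> \<bar>x - y\<bar> \<le> 1 / real n \<Longrightarrow> \<bar>f x - f y\<bar> \<le> e"
proof -
  obtain \<zeta> where \<zeta>: "\<zeta> > 0" "\<forall>y\<in>I01. \<forall>x\<in>I01. dist x y < \<zeta> \<longrightarrow> dist (f x) (f y) < e"
    using assms(1,3) unfolding uniformly_continuous_on_def by blast
  obtain n :: nat where "max (1 / \<zeta>) (1 / c) + 2 < real n" using reals_Archimedean2 by blast
  moreover have "0 < 1 / \<zeta>" "1 / \<zeta> \<le> max (1 / \<zeta>) (1 / c)" "1 / c \<le> max (1 / \<zeta>) (1 / c)"
    using \<zeta>(1) by auto
  ultimately have "2 < real n" "1 / \<zeta> < real n" "1 / c < real n" by linarith+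
  then have n: "n \<ge> 2" "1 / real n < \<zeta>" "1 / real n \<le> c"
    using \<zeta>(1) assms(2) by (auto simp: field_simps)
  have "\<bar>f x - f y\<bar> \<le> e" if "x \<in> I01" "y \<in> I01" "\<bar>x - y\<bar> \<le> 1 / real n" for x y
  proof -
    have "dist x y < \<zeta>" using that(3) n(2) by (simp add: dist_real_def)
    then have "dist (f x) (f y) < e" using \<zeta>(2) that(1,2) by blast
    then show ?thesis by (simp add: dist_real_def)
  qed
  then show thesis using that n by blast
qed

section \<open>Chains of intervals covered by a continuous map\<close>

lemma image_eq_atLeastAtMost_of_no_return:
  fixes g :: "real \<Rightarrow> real"
  assumes uv: "u \<le> v" and gc: "continuous_on {u..v} g" and cd: "c \<le> d"
    and gu: "g u = c" and gv: "g v = d"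
    and no_c: "\<And>t. u < t \<Longrightarrow> t \<le> v \<Longrightarrow> g t \<noteq> c"
    and no_d: "\<And>t. u \<le> t \<Longrightarrow> t < v \<Longrightarrow> g t \<noteq> d"
  shows "g ` {u..v} = {c..d}"
proof
  show "{c..d} \<subseteq> g ` {u..v}"
  proof
    fix y assume "y \<in> {c..d}"
    then obtain t where "u \<le> t" "t \<le> v" "g t = y"
      using IVT'[of g u y v] uv gc gu gv by auto
    then show "y \<in> g ` {u..v}" by auto
  qed
  show "g ` {u..v} \<subseteq> {c..d}"
  proof (rule image_subsetI)
    fix t assume "t \<in> {u..v}"
    then have t: "u \<le> t" "t \<le> v" by auto
    have "c \<le> g t"
    proof (rule ccontr)
      assume "\<not> c \<le> g t"
      moreover have "continuous_on {t..v} g" using gc t by (auto intro: continuous_on_subset)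
      ultimately obtain s where "t \<le> s" "s \<le> v" "g s = c"
        using IVT'[of g t c v] t cd gv by auto
      moreover have "t \<noteq> u" using \<open>\<not> c \<le> g t\<close> gu by auto
      ultimately show False using no_c t by force
    qed
    moreover have "g t \<le> d"
    proof (rule ccontr)
      assume "\<not> g t \<le> d"
      moreover have "continuous_on {u..t} g" using gc t by (auto intro: continuous_on_subset)
      ultimately obtain s where "u \<le> s" "s \<le> t" "g s = d"
        using IVT'[of g u d t] t cd gu by auto
      moreover have "t \<noteq> v" using \<open>\<not> g t \<le> d\<close> gv by auto
      ultimately show False using no_d t by force
    qed
    ultimately show "g t \<in> {c..d}" by simp
  qed
qed

lemma subinterval_image_eq_mono:
  fixes g :: "real \<Rightarrow> real"
  assumes uv: "u \<le> v" and gc: "continuous_on {u..v} g" and le: "g u \<le> g v"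
  shows "\<exists>u' v'. u \<le> u' \<and> u' \<le> v' \<and> v' \<le> v \<and> g ` {u'..v'} = {g u..g v}"
proof -
  \<comment> \<open>the last visit of the value \<open>g u\<close>, followed by the first subsequent visit of \<open>g v\<close>\<close>
  define U where "U = {u..v} \<inter> g -` {g u}"
  have "closed U" unfolding U_def using gc by (intro continuous_closed_preimage) auto
  moreover have "U \<noteq> {}" "bdd_above U" using uv by (auto simp: U_def)
  ultimately have u'U: "Sup U \<in> U" by (rule closed_contains_Sup[rotated -1])
  define u' where "u' = Sup U"
  have u': "u \<le> u'" "u' \<le> v" "g u' = g u" using u'U by (auto simp: U_def u'_def)
  have last: "t \<le> u'" if "t \<in> U" for t
    unfolding u'_def using \<open>bdd_above U\<close> that by (rule cSup_upper[rotated])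
  define V where "V = {u'..v} \<inter> g -` {g v}"
  have "closed V" unfolding V_def using gc u' by (intro continuous_closed_preimage) (auto intro: continuous_on_subset)
  moreover have "V \<noteq> {}" "bdd_below V" using u' by (auto simp: V_def)
  ultimately have v'V: "Inf V \<in> V" by (rule closed_contains_Inf[rotated -1])
  define v' where "v' = Inf V"
  have v': "u' \<le> v'" "v' \<le> v" "g v' = g v" using v'V by (auto simp: V_def v'_def)
  have first: "v' \<le> t" if "t \<in> V" for t
    unfolding v'_def using \<open>bdd_below V\<close> that by (rule cInf_lower[rotated])
  have "g ` {u'..v'} = {g u..g v}"
  proof (rule image_eq_atLeastAtMost_of_no_return)
    show "continuous_on {u'..v'} g" using gc u' v' by (auto intro: continuous_on_subset)
    show "g t \<noteq> g u" if "u' < t" "t \<le> v'" for t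
      using last[of t] that u' v' by (force simp: U_def)
    show "g t \<noteq> g v" if "u' \<le> t" "t < v'" for t
      using first[of t] that v' by (force simp: V_def)
  qed (use u' v' le in auto)
  then show ?thesis using u' v' by blast
qed

lemma subinterval_image_eq:
  fixes g :: "real \<Rightarrow> real"
  assumes gc: "continuous_on {a..b} g" and cd: "c \<le> d" and sub: "{c..d} \<subseteq> g ` {a..b}"
  shows "\<exists>a' b'. a \<le> a' \<and> a' \<le> b' \<and> b' \<le> b \<and> g ` {a'..b'} = {c..d}"
proof -
  have "c \<in> g ` {a..b}" "d \<in> g ` {a..b}" using sub cd by auto
  then obtain u v where u: "u \<in> {a..b}" "g u = c" and v: "v \<in> {a..b}" "g v = d"
    by (metis imageE)
  show ?thesis
  proof (cases "u \<le> v")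
    case True
    moreover have "continuous_on {u..v} g" using gc u v by (auto intro: continuous_on_subset)
    ultimately obtain u' v' where "u \<le> u'" "u' \<le> v'" "v' \<le> v" "g ` {u'..v'} = {g u..g v}"
      using subinterval_image_eq_mono u v cd by blast
    then show ?thesis using u v by (intro exI[of _ u'] exI[of _ v']) auto
  next
    case False
    have "continuous_on {v..u} (uminus \<circ> g)"
      using gc u v by (auto intro!: continuous_intros intro: continuous_on_subset)
    then obtain v' u' where vu': "v \<le> v'" "v' \<le> u'" "u' \<le> u"
        "(uminus \<circ> g) ` {v'..u'} = {- d..- c}"
      using subinterval_image_eq_mono[of v u "uminus \<circ> g"] False u v cd by auto
    have "g ` {v'..u'} = uminus ` ((uminus \<circ> g) ` {v'..u'})" by (simp add: image_image)
    also have "\<dots> = {c..d}" using vu'(4) by simp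
    finally show ?thesis using vu' u v by (intro exI[of _ v'] exI[of _ u']) auto
  qed
qed

lemma continuous_on_funpow_I01:
  assumes "continuous_on I01 g" "g ` I01 \<subseteq> I01"
  shows "continuous_on I01 (g ^^ m) \<and> (g ^^ m) ` I01 \<subseteq> I01"
proof (induction m)
  case (Suc m)
  have "continuous_on I01 (g \<circ> (g ^^ m))"
    using Suc assms by (intro continuous_on_compose) (auto intro: continuous_on_subset)
  moreover have "(g \<circ> (g ^^ m)) ` I01 \<subseteq> I01" using Suc assms by (auto simp: image_comp[symmetric])
  ultimately show ?case by simp
qed (simp add: continuous_on_id)

lemma covering_chain_backward:
  fixes g :: "real \<Rightarrow> real" and a b :: "nat \<Rightarrow> real"
  assumes cov: "\<And>i. {a (Suc i)..b (Suc i)} \<subseteq> g ` {a i..b i}"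
    and y: "y \<in> {a m..b m}"
  shows "\<exists>z\<in>{a 0..b 0}. (g ^^ m) z = y \<and> (\<forall>i\<le>m. (g ^^ i) z \<in> {a i..b i})"
  using y
proof (induction m arbitrary: y)
  case (Suc m)
  then obtain y' where y': "y' \<in> {a m..b m}" "g y' = y" using cov by blast
  then obtain z where z: "z \<in> {a 0..b 0}" "(g ^^ m) z = y'" "\<forall>i\<le>m. (g ^^ i) z \<in> {a i..b i}"
    using Suc.IH by blast
  have "(g ^^ Suc m) z = y" using z y' by simp
  moreover have "\<forall>i\<le>Suc m. (g ^^ i) z \<in> {a i..b i}"
    using z Suc.prems \<open>(g ^^ Suc m) z = y\<close> by (metis le_Suc_eq)
  ultimately show ?case using z by blast
qed auto

lemma covering_chain_orbit:
  fixes g :: "real \<Rightarrow> real" and a b :: "nat \<Rightarrow> real"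
  assumes gc: "continuous_on I01 g" and gI: "g ` I01 \<subseteq> I01"
    and ab: "\<And>i. a i \<le> b i" and KI: "\<And>i. {a i..b i} \<subseteq> I01"
    and cov: "\<And>i. {a (Suc i)..b (Suc i)} \<subseteq> g ` {a i..b i}"
  shows "\<exists>z\<in>{a 0..b 0}. \<forall>i. (g ^^ i) z \<in> {a i..b i}"
proof -
  define K where "K i = {a i..b i}" for i
  define Z where "Z m = K 0 \<inter> (\<Inter>i\<in>{..m}. I01 \<inter> (g ^^ i) -` K i)" for m
  have Z_ne: "Z m \<noteq> {}" for m
  proof -
    obtain z where "z \<in> K 0" "\<forall>i\<le>m. (g ^^ i) z \<in> K i"
      using covering_chain_backward[of a b g "a m" m] cov ab[of m] unfolding K_def by auto
    moreover have "z \<in> I01" using \<open>z \<in> K 0\<close> KI[of 0] unfolding K_def by blast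
    ultimately show ?thesis by (auto simp: Z_def)
  qed
  have Z_compact: "compact (Z m)" for m
  proof -
    have "closed (I01 \<inter> (g ^^ i) -` K i)" for i
      using continuous_on_funpow_I01[OF gc gI, of i]
      by (intro continuous_closed_preimage) (auto simp: K_def I01_def)
    then have "closed (\<Inter>i\<in>{..m}. I01 \<inter> (g ^^ i) -` K i)" by (intro closed_INT) blast
    moreover have "compact (K 0)" by (simp add: K_def)
    ultimately show ?thesis unfolding Z_def by (intro compact_Int_closed)
  qed
  have Z_decr: "m \<le> m' \<Longrightarrow> Z m' \<subseteq> Z m" for m m' by (auto simp: Z_def)
  have "\<Inter>(range Z) \<noteq> {}" by (rule compact_nest[OF Z_compact Z_ne Z_decr])
  then obtain z where z: "\<forall>m. z \<in> Z m" by auto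
  then have "z \<in> K 0" by (auto simp: Z_def)
  moreover have "(g ^^ i) z \<in> K i" for i using z[rule_format, of i] by (auto simp: Z_def)
  ultimately show ?thesis unfolding K_def by blast
qed

lemma fixed_point_of_interval_covering:
  fixes G :: "real \<Rightarrow> real"
  assumes "\<alpha> \<le> \<beta>" "continuous_on {\<alpha>..\<beta>} G" "{\<alpha>..\<beta>} \<subseteq> G ` {\<alpha>..\<beta>}"
  shows "\<exists>z\<in>{\<alpha>..\<beta>}. G z = z"
proof -
  have "\<alpha> \<in> G ` {\<alpha>..\<beta>}" "\<beta> \<in> G ` {\<alpha>..\<beta>}" using assms(1,3) by auto
  then obtain p1 p2 where p: "p1 \<in> {\<alpha>..\<beta>}" "G p1 = \<alpha>" "p2 \<in> {\<alpha>..\<beta>}" "G p2 = \<beta>"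
    by (metis imageE)
  define \<phi> where "\<phi> t = G t - t" for t
  have \<phi>: "\<phi> p1 \<le> 0" "0 \<le> \<phi> p2" using p by (auto simp: \<phi>_def)
  have "continuous_on {min p1 p2..max p1 p2} G"
    by (rule continuous_on_subset[OF assms(2)]) (use p in auto)
  then have "continuous_on {min p1 p2..max p1 p2} \<phi>"
    unfolding \<phi>_def by (intro continuous_intros)
  then obtain z where "min p1 p2 \<le> z" "z \<le> max p1 p2" "\<phi> z = 0"
  proof (cases "p1 \<le> p2")
    case True
    then show ?thesis using IVT'[of \<phi> p1 0 p2] \<phi> \<open>continuous_on _ \<phi>\<close> that by auto
  next
    case False
    then show ?thesis using IVT2'[of \<phi> p1 0 p2] \<phi> \<open>continuous_on _ \<phi>\<close> that by auto
  qed
  then show ?thesis using p by (intro bexI[of _ z]) (auto simp: \<phi>_def)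
qed

lemma covering_chain_subinterval:
  fixes g :: "real \<Rightarrow> real" and a b :: "nat \<Rightarrow> real"
  assumes gc: "continuous_on I01 g" and gI: "g ` I01 \<subseteq> I01"
    and ab: "\<And>i. a i \<le> b i" and KI: "\<And>i. {a i..b i} \<subseteq> I01"
    and cov: "\<And>i. i < m \<Longrightarrow> {a (Suc i)..b (Suc i)} \<subseteq> g ` {a i..b i}"
  shows "\<exists>\<alpha> \<beta>. \<alpha> \<le> \<beta> \<and> {\<alpha>..\<beta>} \<subseteq> {a 0..b 0} \<and> (g ^^ m) ` {\<alpha>..\<beta>} = {a m..b m}
      \<and> (\<forall>i\<le>m. (g ^^ i) ` {\<alpha>..\<beta>} \<subseteq> {a i..b i})"
  using cov
proof (induction m)
  case 0
  show ?case using ab[of 0] by (intro exI[of _ "a 0"] exI[of _ "b 0"]) simp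
next
  case (Suc m)
  have "\<exists>\<alpha> \<beta>. \<alpha> \<le> \<beta> \<and> {\<alpha>..\<beta>} \<subseteq> {a 0..b 0} \<and> (g ^^ m) ` {\<alpha>..\<beta>} = {a m..b m}
      \<and> (\<forall>i\<le>m. (g ^^ i) ` {\<alpha>..\<beta>} \<subseteq> {a i..b i})"
    by (rule Suc.IH) (simp add: Suc.prems)
  then obtain \<alpha> \<beta> where \<alpha>\<beta>: "\<alpha> \<le> \<beta>" "{\<alpha>..\<beta>} \<subseteq> {a 0..b 0}" "(g ^^ m) ` {\<alpha>..\<beta>} = {a m..b m}"
      "\<forall>i\<le>m. (g ^^ i) ` {\<alpha>..\<beta>} \<subseteq> {a i..b i}"
    by blast
  have "{\<alpha>..\<beta>} \<subseteq> I01" using \<alpha>\<beta>(2) KI[of 0] by blast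
  then have "continuous_on {\<alpha>..\<beta>} (g ^^ Suc m)"
    using continuous_on_funpow_I01[OF gc gI, of "Suc m"] continuous_on_subset by blast
  moreover have "(g ^^ Suc m) ` {\<alpha>..\<beta>} = g ` {a m..b m}"
    by (metis \<alpha>\<beta>(3) funpow.simps(2) image_comp)
  then have "{a (Suc m)..b (Suc m)} \<subseteq> (g ^^ Suc m) ` {\<alpha>..\<beta>}"
    using Suc.prems[of m] by simp
  ultimately obtain \<alpha>' \<beta>' where \<alpha>'\<beta>': "\<alpha> \<le> \<alpha>'" "\<alpha>' \<le> \<beta>'" "\<beta>' \<le> \<beta>"
      "(g ^^ Suc m) ` {\<alpha>'..\<beta>'} = {a (Suc m)..b (Suc m)}"
    using subinterval_image_eq[of \<alpha> \<beta> "g ^^ Suc m" "a (Suc m)" "b (Suc m)"] ab[of "Suc m"] by blast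
  have sub: "{\<alpha>'..\<beta>'} \<subseteq> {\<alpha>..\<beta>}" using \<alpha>'\<beta>' by auto
  have "(g ^^ i) ` {\<alpha>'..\<beta>'} \<subseteq> {a i..b i}" if "i \<le> Suc m" for i
  proof (cases "i = Suc m")
    case False
    then have "i \<le> m" using that by simp
    then show ?thesis using \<alpha>\<beta>(4) sub by (meson image_mono order_trans)
  qed (use \<alpha>'\<beta>'(4) in simp)
  then show ?case using \<alpha>'\<beta>'(2,4) \<alpha>\<beta>(2) sub by (intro exI[of _ \<alpha>'] exI[of _ \<beta>']) auto
qed

lemma covering_chain_periodic_point:
  fixes g :: "real \<Rightarrow> real" and a b :: "nat \<Rightarrow> real"
  assumes gc: "continuous_on I01 g" and gI: "g ` I01 \<subseteq> I01"
    and ab: "\<And>i. a i \<le> b i" and KI: "\<And>i. {a i..b i} \<subseteq> I01"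
    and cov: "\<And>i. {a (Suc i)..b (Suc i)} \<subseteq> g ` {a i..b i}"
    and M: "M \<ge> 1" and per: "\<And>j. a (M + j) = a j" "\<And>j. b (M + j) = b j"
  shows "\<exists>z\<in>I01. (g ^^ M) z = z \<and> (\<forall>i. (g ^^ i) z \<in> {a i..b i})"
proof -
  define K where "K i = {a i..b i}" for i
  have K_per: "K (j + q * M) = K j" for j q
  proof (induction q)
    case (Suc q)
    have "j + Suc q * M = M + (j + q * M)" by simp
    then show ?case using Suc per[of "j + q * M"] by (simp only: K_def)
  qed simp
  obtain \<alpha> \<beta> where \<alpha>\<beta>: "\<alpha> \<le> \<beta>" "{\<alpha>..\<beta>} \<subseteq> K 0" "(g ^^ M) ` {\<alpha>..\<beta>} = K M"
      "\<forall>i\<le>M. (g ^^ i) ` {\<alpha>..\<beta>} \<subseteq> K i"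
    using covering_chain_subinterval[where m = M and a = a and b = b, OF gc gI ab KI] cov
    unfolding K_def by blast
  have "K M = K 0" using K_per[of 0 1] by simp
  have "{\<alpha>..\<beta>} \<subseteq> I01" using \<alpha>\<beta>(2) KI[of 0] unfolding K_def by blast
  then have "continuous_on {\<alpha>..\<beta>} (g ^^ M)"
    using continuous_on_funpow_I01[OF gc gI, of M] continuous_on_subset by blast
  moreover have "{\<alpha>..\<beta>} \<subseteq> (g ^^ M) ` {\<alpha>..\<beta>}" using \<alpha>\<beta>(2,3) \<open>K M = K 0\<close> by simp
  ultimately obtain z where z: "z \<in> {\<alpha>..\<beta>}" "(g ^^ M) z = z"
    using fixed_point_of_interval_covering[OF \<alpha>\<beta>(1)] by blast
  have z_fix: "(g ^^ (q * M)) z = z" for q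
    by (induction q) (simp_all add: funpow_add z(2))
  have "(g ^^ i) z \<in> K i" for i
  proof -
    have "i mod M \<le> M" using M by (simp add: less_imp_le)
    then have "(g ^^ (i mod M)) z \<in> K (i mod M)" using \<alpha>\<beta>(4) z(1) by blast
    moreover have "(g ^^ (i mod M + i div M * M)) z = (g ^^ (i mod M)) z"
      by (simp only: funpow_add comp_apply z_fix)
    ultimately show ?thesis using K_per[of "i mod M" "i div M"] by simp
  qed
  moreover have "z \<in> I01" using z(1) \<open>{\<alpha>..\<beta>} \<subseteq> I01\<close> by blast
  ultimately show ?thesis using z(2) unfolding K_def by blast
qed

lemma covering_chain_periodic_orbit:
  fixes g :: "real \<Rightarrow> real" and a b :: "nat \<Rightarrow> real"
  assumes gc: "continuous_on I01 g" and gI: "g ` I01 \<subseteq> I01"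
    and ab: "\<And>i. a i \<le> b i" and KI: "\<And>i. {a i..b i} \<subseteq> I01"
    and cov: "\<And>i. {a (Suc i)..b (Suc i)} \<subseteq> g ` {a i..b i}"
    and M: "M \<ge> 1" and per: "\<And>j. a (i0 + M + j) = a (i0 + j)" "\<And>j. b (i0 + M + j) = b (i0 + j)"
  shows "\<exists>z\<in>I01. (g ^^ M) z = z \<and> (\<forall>i. (g ^^ i) z \<in> {a (M * i0 + i)..b (M * i0 + i)})"
proof -
  have cov': "{a (i0 + Suc i)..b (i0 + Suc i)} \<subseteq> g ` {a (i0 + i)..b (i0 + i)}" for i
    using cov[of "i0 + i"] by simp
  have per': "a (i0 + (M + j)) = a (i0 + j)" "b (i0 + (M + j)) = b (i0 + j)" for j
    using per[of j] by (simp_all add: add.assoc)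
  obtain z' where z': "z' \<in> I01" "(g ^^ M) z' = z'" "\<forall>i. (g ^^ i) z' \<in> {a (i0 + i)..b (i0 + i)}"
    using covering_chain_periodic_point[OF gc gI, where a = "\<lambda>i. a (i0 + i)" and b = "\<lambda>i. b (i0 + i)",
        OF ab KI cov' M per'] by blast
  \<comment> \<open>move forward to the time \<open>M * i0\<close>, which is \<open>i0\<close> plus a multiple of \<open>M\<close>\<close>
  define z where "z = (g ^^ ((M - 1) * i0)) z'"
  have shift: "M * i0 + i = i0 + (i + (M - 1) * i0)" for i
    using M by (cases M) simp_all
  have "(g ^^ i) z \<in> {a (M * i0 + i)..b (M * i0 + i)}" for i
    using z'(3)[rule_format, of "i + (M - 1) * i0"] by (simp add: z_def shift funpow_add)
  moreover have "(g ^^ M) z = z"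
  proof -
    have "(g ^^ M) z = (g ^^ (M + (M - 1) * i0)) z'" by (simp add: z_def funpow_add)
    also have "\<dots> = (g ^^ ((M - 1) * i0)) ((g ^^ M) z')" by (metis add.commute comp_apply funpow_add)
    finally show ?thesis using z'(2) by (simp add: z_def)
  qed
  moreover have "z \<in> I01" using calculation(1)[of 0] KI[of "M * i0"] by auto
  ultimately show ?thesis by blast
qed

lemma periodic_add_mult:
  fixes xs :: "nat \<Rightarrow> 'a"
  assumes "\<And>i. xs (i + N) = xs i"
  shows "xs (i + q * N) = xs i"
proof (induction q)
  case (Suc q)
  have "i + Suc q * N = (i + q * N) + N" by simp
  then show ?case using Suc assms by metis
qed simp

lemma driven_seq_eventually_periodic:
  fixes ks :: "nat \<Rightarrow> 'a" and xs :: "nat \<Rightarrow> 'b"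
  assumes S: "finite S" "\<And>i. ks i \<in> S" and step: "\<And>i. ks (Suc i) = \<phi> (ks i) (xs (Suc i))"
    and N: "N \<ge> 1" "\<And>i. xs (i + N) = xs i"
  shows "\<exists>i0 M. N dvd i0 \<and> M \<ge> 1 \<and> (\<forall>j. ks (i0 + M + j) = ks (i0 + j))"
proof -
  have ks_cong: "ks (p + j) = ks (q + j)" if "ks p = ks q" "\<And>j. xs (p + j) = xs (q + j)" for p q j
  proof (induction j)
    case (Suc j)
    have "xs (Suc (p + j)) = xs (Suc (q + j))" using that(2)[of "Suc j"] by simp
    then show ?case using Suc by (simp add: step)
  qed (simp add: that(1))
  have "card ((\<lambda>m. ks (m * N)) ` {..card S}) \<le> card S"
    using S by (intro card_mono) auto
  then have "card ((\<lambda>m. ks (m * N)) ` {..card S}) < card {..card S}" by simp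
  then have "\<not> inj_on (\<lambda>m. ks (m * N)) {..card S}" by (rule pigeonhole)
  then obtain m1 m2 where m: "m1 < m2" "ks (m1 * N) = ks (m2 * N)"
    unfolding inj_on_def by (metis linorder_neqE_nat)
  have xs_eq: "xs (m1 * N + j) = xs (m2 * N + j)" for j
    using periodic_add_mult[of xs N j, OF N(2)] by (metis add.commute)
  have ks_eq: "ks (m1 * N + j) = ks (m2 * N + j)" for j
    by (rule ks_cong[OF m(2)]) (rule xs_eq)
  have "m2 * N = m1 * N + (m2 - m1) * N"
    using m(1) by (simp add: diff_mult_distrib)
  then have "ks (m1 * N + (m2 - m1) * N + j) = ks (m1 * N + j)" for j
    using ks_eq[of j] by simp
  moreover have "(m2 - m1) * N \<ge> 1" using m(1) N(1) by simp
  ultimately show ?thesis by (intro exI[of _ "m1 * N"] exI[of _ "(m2 - m1) * N"]) simp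
qed

section \<open>Piecewise affine zigzag paths\<close>

fun cells :: "nat list \<Rightarrow> nat list" where
  "cells (v#w#vs) = min v w # cells (w#vs)" | "cells _ = []"

fun unit_steps :: "nat list \<Rightarrow> bool" where
  "unit_steps (v#w#vs) = ((w = Suc v \<or> v = Suc w) \<and> unit_steps (w#vs))" | "unit_steps _ = True"

text \<open>\<open>zigzag h L x vs\<close> starts at time \<open>x\<close> and moves affinely between the consecutive
  heights \<open>v * h\<close> of \<open>vs\<close>, spending time \<open>L j\<close> on each step across the cell \<open>j = min v w\<close>.\<close>
fun zigzag :: "real \<Rightarrow> (nat \<Rightarrow> real) \<Rightarrow> real \<Rightarrow> nat list \<Rightarrow> real \<Rightarrow> real" where
  "zigzag h L x (v#w#vs) t = (if t \<le> x + L (min v w)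
      then real v * h + (real w * h - real v * h) * (t - x) / L (min v w)
      else zigzag h L (x + L (min v w)) (w#vs) t)"
| "zigzag h L x [v] t = real v * h"
| "zigzag h L x [] t = 0"

fun zigzag_knots :: "(nat \<Rightarrow> real) \<Rightarrow> real \<Rightarrow> nat list \<Rightarrow> real set" where
  "zigzag_knots L x (v#w#vs) = insert x (zigzag_knots L (x + L (min v w)) (w#vs))"
| "zigzag_knots L x _ = {x}"

definition zigzag_end :: "(nat \<Rightarrow> real) \<Rightarrow> real \<Rightarrow> nat list \<Rightarrow> real" where
  "zigzag_end L x vs = x + sum_list (map L (cells vs))"

lemma zigzag_end_simps[simp]:
  "zigzag_end L x (v#w#vs) = zigzag_end L (x + L (min v w)) (w#vs)"
  "zigzag_end L x [v] = x" "zigzag_end L x [] = x"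
  by (simp_all add: zigzag_end_def)

definition pos_on_cells :: "(nat \<Rightarrow> real) \<Rightarrow> nat list \<Rightarrow> bool" where
  "pos_on_cells L vs \<longleftrightarrow> (\<forall>j \<in> set (cells vs). L j > 0)"

lemma pos_on_cells_simps[simp]:
  "pos_on_cells L (v#w#vs) \<longleftrightarrow> L (min v w) > 0 \<and> pos_on_cells L (w#vs)"
  "pos_on_cells L [v]" "pos_on_cells L []"
  by (auto simp: pos_on_cells_def)

lemma zigzag_end_ge: "pos_on_cells L vs \<Longrightarrow> x \<le> zigzag_end L x vs"
proof (induction L x vs rule: zigzag_knots.induct)
  case (1 L x v w vs)
  then have "x + L (min v w) \<le> zigzag_end L (x + L (min v w)) (w#vs)" "L (min v w) > 0" by auto
  then show ?case by simp
qed simp_all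

lemma zigzag_start: "pos_on_cells L vs \<Longrightarrow> zigzag h L x vs x = (if vs = [] then 0 else real (hd vs) * h)"
  by (cases "(h, L, x, vs, x)" rule: zigzag.cases) auto

lemma zigzag_end_gt: "pos_on_cells L (v#w#vs) \<Longrightarrow> x < zigzag_end L x (v#w#vs)"
  using zigzag_end_ge[of L "w#vs" "x + L (min v w)"] by simp

lemma zigzag_at_end: "pos_on_cells L vs \<Longrightarrow> vs \<noteq> [] \<Longrightarrow> zigzag h L x vs (zigzag_end L x vs) = real (last vs) * h"
proof (induction L x vs rule: zigzag_knots.induct)
  case (1 L x v w vs)
  show ?case
  proof (cases vs)
    case Nil
    then show ?thesis using 1 by simp
  next
    case (Cons u us)
    have "x + L (min v w) < zigzag_end L (x + L (min v w)) (w#u#us)"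
      using 1 Cons by (intro zigzag_end_gt) simp
    then show ?thesis using 1 Cons by simp
  qed
qed simp_all

lemma continuous_on_zigzag: "pos_on_cells L vs \<Longrightarrow> continuous_on {x..zigzag_end L x vs} (zigzag h L x vs)"
proof (induction L x vs rule: zigzag_knots.induct)
  case (1 L x v w vs)
  define m where "m = x + L (min v w)"
  have c1: "continuous_on {x..m} (zigzag h L x (v#w#vs))"
  proof (rule continuous_on_eq[where f = "\<lambda>t. real v * h + (real w * h - real v * h) * (t - x) / L (min v w)"])
    show "continuous_on {x..m} (\<lambda>t. real v * h + (real w * h - real v * h) * (t - x) / L (min v w))"
      using 1 by (intro continuous_intros) auto
  qed (auto simp: m_def)
  have c2: "continuous_on {m..zigzag_end L x (v#w#vs)} (zigzag h L x (v#w#vs))"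
  proof (rule continuous_on_eq[where f = "zigzag h L m (w#vs)"])
    show "continuous_on {m..zigzag_end L x (v#w#vs)} (zigzag h L m (w # vs))"
      using 1 by (simp add: m_def)
    fix t assume "t \<in> {m..zigzag_end L x (v#w#vs)}"
    then show "zigzag h L m (w # vs) t = zigzag h L x (v # w # vs) t"
      using 1 by (cases "t = m") (auto simp: m_def zigzag_start)
  qed
  have "{x..zigzag_end L x (v#w#vs)} = {x..m} \<union> {m..zigzag_end L x (v#w#vs)}"
    using 1 zigzag_end_ge[of L "w#vs" m] by (auto simp: m_def)
  then show ?case using continuous_on_closed_Un[OF _ _ c1 c2] by simp
qed auto

lemma zigzag_range:
  assumes "pos_on_cells L vs" "vs \<noteq> []" "h \<ge> 0" "t \<in> {x..zigzag_end L x vs}"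
  shows "real (Min (set vs)) * h \<le> zigzag h L x vs t \<and> zigzag h L x vs t \<le> real (Max (set vs)) * h"
  using assms
proof (induction L x vs rule: zigzag_knots.induct)
  case (1 L x v w vs)
  define m where "m = x + L (min v w)"
  show ?case
  proof (cases "t \<le> m")
    case True
    define \<theta> where "\<theta> = (t - x) / L (min v w)"
    have th: "0 \<le> \<theta>" "\<theta> \<le> 1" using 1 True by (auto simp: \<theta>_def m_def)
    have eq: "zigzag h L x (v#w#vs) t = real v * h + (real w * h - real v * h) * \<theta>"
      using True by (simp add: m_def \<theta>_def)
    have "Min (set (v#w#vs)) \<le> v" "Min (set (v#w#vs)) \<le> w" "v \<le> Max (set (v#w#vs))" "w \<le> Max (set (v#w#vs))"
      by (simp_all only: Min_le Max_ge finite_set list.set_intros)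
    hence "Min (set (v#w#vs)) \<le> min v w" "max v w \<le> Max (set (v#w#vs))" by auto
    hence "real (Min (set (v#w#vs))) * h \<le> min (real v * h) (real w * h)"
          "max (real v * h) (real w * h) \<le> real (Max (set (v#w#vs))) * h"
      using 1(4) by (auto intro: mult_right_mono)
    then show ?thesis using convex_combination_between_min_max[OF th, of "real v * h" "real w * h"] eq by linarith
  next
    case False
    have "t \<in> {m..zigzag_end L m (w#vs)}" using 1 False by (simp add: m_def)
    hence ih: "real (Min (set (w#vs))) * h \<le> zigzag h L m (w#vs) t \<and> zigzag h L m (w#vs) t \<le> real (Max (set (w#vs))) * h"
      using 1 by (simp add: m_def)
    have "Min (set (v#w#vs)) \<le> Min (set (w#vs))" "Max (set (w#vs)) \<le> Max (set (v#w#vs))" by auto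
    hence "real (Min (set (v#w#vs))) * h \<le> real (Min (set (w#vs))) * h"
          "real (Max (set (w#vs))) * h \<le> real (Max (set (v#w#vs))) * h"
      using 1(4) by (auto intro: mult_right_mono)
    then show ?thesis using ih False by (simp add: m_def)
  qed
qed auto

lemma zigzag_attains:
  assumes "pos_on_cells L vs" "u \<in> set vs"
  shows "\<exists>t\<in>{x..zigzag_end L x vs}. zigzag h L x vs t = real u * h"
  using assms
proof (induction L x vs rule: zigzag_knots.induct)
  case (1 L x v w vs)
  define m where "m = x + L (min v w)"
  show ?case
  proof (cases "u = v")
    case True
    then show ?thesis using 1 zigzag_end_ge[of L "v#w#vs" x] by (intro bexI[of _ x]) (auto simp: zigzag_start)
  next
    case False
    then obtain t where t: "t \<in> {m..zigzag_end L m (w#vs)}" "zigzag h L m (w#vs) t = real u * h"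
      using 1 by (auto simp: m_def)
    have "zigzag h L x (v#w#vs) t = real u * h"
      using t 1 by (cases "t = m") (auto simp: m_def zigzag_start)
    moreover have "x \<le> m" using 1 by (simp add: m_def)
    ultimately show ?thesis using t by (intro bexI[of _ t]) (auto simp: m_def)
  qed
qed auto

lemma zigzag_knots_props: "pos_on_cells L vs \<Longrightarrow> finite (zigzag_knots L x vs) \<and> x \<in> zigzag_knots L x vs \<and> zigzag_end L x vs \<in> zigzag_knots L x vs
   \<and> zigzag_knots L x vs \<subseteq> {x..zigzag_end L x vs}"
proof (induction L x vs rule: zigzag_knots.induct)
  case (1 L x v w vs)
  then show ?case using zigzag_end_ge[of L "v#w#vs" x] by auto
qed auto

lemma zigzag_locally_affine:
  assumes "pos_on_cells L vs" "t \<in> {x<..<zigzag_end L x vs} - zigzag_knots L x vs"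
  shows "\<exists>e>0. \<exists>a b. \<forall>s. \<bar>s - t\<bar> < e \<longrightarrow> x < s \<and> s < zigzag_end L x vs \<and> zigzag h L x vs s = a * s + b"
  using assms
proof (induction L x vs rule: zigzag_knots.induct)
  case (1 L x v w vs)
  define m where "m = x + L (min v w)"
  show ?case
  proof (cases "t < m")
    case True
    define e where "e = min (t - x) (m - t)"
    have "e > 0" using True 1 by (auto simp: e_def)
    moreover have "\<forall>s. \<bar>s - t\<bar> < e \<longrightarrow> x < s \<and> s < zigzag_end L x (v#w#vs) \<and>
      zigzag h L x (v#w#vs) s = ((real w * h - real v * h) / L (min v w)) * s +
         (real v * h - (real w * h - real v * h) * x / L (min v w))"
    proof (intro allI impI)
      fix s assume "\<bar>s - t\<bar> < e"
      hence s: "x < s" "s < m" by (auto simp: e_def)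
      then have "s < zigzag_end L x (v#w#vs)" using zigzag_end_ge[of L "w#vs" m] 1 by (simp add: m_def)
      then show "x < s \<and> s < zigzag_end L x (v#w#vs) \<and> zigzag h L x (v#w#vs) s = ((real w * h - real v * h) / L (min v w)) * s +
         (real v * h - (real w * h - real v * h) * x / L (min v w))"
        using s by (simp add: m_def field_simps)
    qed
    ultimately show ?thesis by blast
  next
    case False
    have "m \<in> zigzag_knots L m (w#vs)" using zigzag_knots_props[of L "w#vs" m] 1 by simp
    moreover have "t \<notin> zigzag_knots L m (w#vs)" using 1 by (simp add: m_def)
    ultimately have "t \<noteq> m" by blast
    hence "t > m" using False by simp
    hence "t \<in> {m<..<zigzag_end L m (w#vs)} - zigzag_knots L m (w#vs)" using 1 by (auto simp: m_def)
    then obtain e a b where e: "e > 0" "\<forall>s. \<bar>s - t\<bar> < e \<longrightarrow> m < s \<and> s < zigzag_end L m (w#vs) \<and> zigzag h L m (w#vs) s = a * s + b"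
      using 1 by (auto simp: m_def)
    have "x < m" using 1 by (simp add: m_def)
    then show ?thesis using e by (intro exI[of _ e] conjI exI[of _ a] exI[of _ b] allI impI) (auto simp: m_def)
  qed
qed auto

lemma emeasure_unit_step_vimage:
  fixes h L x :: real and v w :: nat
  assumes L: "L > 0" and h: "h > 0" and vw: "w = Suc v \<or> v = Suc w" and A: "A \<in> sets borel"
  shows "{s \<in> {x..x+L}. real v * h + (real w * h - real v * h) * (s - x) / L \<in> A} \<in> sets borel \<and>
    emeasure lborel {s \<in> {x..x+L}. real v * h + (real w * h - real v * h) * (s - x) / L \<in> A}
     = ennreal (L / h) * emeasure lborel (A \<inter> {real (min v w) * h .. real (min v w + 1) * h})"
proof -
  define c where "c = (real w * h - real v * h) / L"
  define t0 where "t0 = real v * h - c * x"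
  define J where "J = {real (min v w) * h .. real (min v w + 1) * h}"
  have phi: "real v * h + (real w * h - real v * h) * (s - x) / L = t0 + c * s" for s
    using L by (simp add: c_def t0_def field_simps)
  have "real w * h - real v * h = h \<or> real w * h - real v * h = - h"
    using vw by (auto simp: algebra_simps)
  hence absc: "\<bar>c\<bar> = h / L" using h L unfolding c_def by auto
  have c0: "c \<noteq> 0" using absc h L by auto
  have inJ: "t0 + c * s \<in> J \<longleftrightarrow> s \<in> {x..x+L}" for s
  proof -
    define q where "q = (s - x) / L"
    have "t0 + c * s = real v * h + (real w * h - real v * h) * q"
      using phi[of s] by (simp add: q_def)
    then have "t0 + c * s \<in> J \<longleftrightarrow> 0 \<le> h * q \<and> h * q \<le> h"
      using vw by (cases "w = Suc v") (auto simp: J_def algebra_simps)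
    also have "\<dots> \<longleftrightarrow> 0 \<le> q \<and> q \<le> 1"
      using h by (simp add: zero_le_mult_iff mult_le_cancel_left1)
    also have "\<dots> \<longleftrightarrow> s \<in> {x..x+L}"
      using L by (simp add: q_def field_simps)
    finally show ?thesis .
  qed
  have seteq: "{s \<in> {x..x+L}. real v * h + (real w * h - real v * h) * (s - x) / L \<in> A} = {s. t0 + c * s \<in> A \<inter> J}"
    using inJ phi by auto
  have AJ: "A \<inter> J \<in> sets borel" using A by (auto simp: J_def)
  have meas: "{s. t0 + c * s \<in> A \<inter> J} \<in> sets borel"
  proof -
    have "(\<lambda>s. t0 + c * s) \<in> borel_measurable borel" by measurable
    from measurable_sets[OF this AJ] show ?thesis by (simp add: vimage_def)
  qed
  have "emeasure lborel (A \<inter> J) = ennreal (h / L) * emeasure lborel {s. t0 + c * s \<in> A \<inter> J}"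
    using emeasure_lborel_affine_vimage[OF c0 AJ, of t0] absc by simp
  hence "ennreal (L / h) * emeasure lborel (A \<inter> J) = ennreal (L / h) * ennreal (h / L) * emeasure lborel {s. t0 + c * s \<in> A \<inter> J}"
    by (simp add: mult.assoc)
  also have "ennreal (L / h) * ennreal (h / L) = 1"
    using L h by (simp add: ennreal_mult'[symmetric])
  finally show ?thesis using seteq meas by (simp add: J_def)
qed

lemma emeasure_lborel_Collect_eq_conj: "emeasure lborel {t::real. t = x \<and> P} = 0"
  by (cases P) auto

lemma emeasure_zigzag_vimage:
  assumes "pos_on_cells L vs" "unit_steps vs" "h > 0" "A \<in> sets borel"
  shows "{t \<in> {x..zigzag_end L x vs}. zigzag h L x vs t \<in> A} \<in> sets borel \<and>
    emeasure lborel {t \<in> {x..zigzag_end L x vs}. zigzag h L x vs t \<in> A} =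
    sum_list (map (\<lambda>j. ennreal (L j / h) * emeasure lborel (A \<inter> {real j * h .. real (j + 1) * h})) (cells vs))"
  using assms
proof (induction L x vs rule: zigzag_knots.induct)
  case (1 L x v w vs)
  define m where "m = x + L (min v w)"
  define S1 where "S1 = {s \<in> {x..m}. real v * h + (real w * h - real v * h) * (s - x) / L (min v w) \<in> A}"
  define S2 where "S2 = {t \<in> {m..zigzag_end L m (w#vs)}. zigzag h L m (w#vs) t \<in> A}"
  have s1: "S1 \<in> sets borel \<and> emeasure lborel S1 = ennreal (L (min v w) / h) * emeasure lborel (A \<inter> {real (min v w) * h .. real (min v w + 1) * h})"
    unfolding S1_def m_def using emeasure_unit_step_vimage[of "L (min v w)" h w v A x] 1 by auto
  have s2: "S2 \<in> sets borel \<and> emeasure lborel S2 = sum_list (map (\<lambda>j. ennreal (L j / h) * emeasure lborel (A \<inter> {real j * h .. real (j + 1) * h})) (cells (w#vs)))"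
    unfolding S2_def m_def using 1 by auto
  have S2m: "S2 - {m} \<in> sets borel" using s2 by auto
  have e2: "emeasure lborel (S2 - {m}) = emeasure lborel S2"
    using s2 by (intro emeasure_Diff_null_set) (auto intro: finite_imp_null_set_lborel)
  have xm: "x \<le> m" using 1 by (simp add: m_def)
  have me: "m \<le> zigzag_end L m (w#vs)" using 1 by (intro zigzag_end_ge) simp
  have seteq: "{t \<in> {x..zigzag_end L x (v#w#vs)}. zigzag h L x (v#w#vs) t \<in> A} = S1 \<union> (S2 - {m})"
    using xm me by (auto simp: S1_def S2_def m_def)
  have disj: "S1 \<inter> (S2 - {m}) = {}" by (auto simp: S1_def S2_def)
  have "emeasure lborel (S1 \<union> (S2 - {m})) = emeasure lborel S1 + emeasure lborel (S2 - {m})"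
    using s1 S2m disj by (intro plus_emeasure[symmetric]) auto
  moreover have "S1 \<union> (S2 - {m}) \<in> sets borel" using s1 S2m by auto
  ultimately show ?case using seteq s1 s2 S2m e2 by (simp add: m_def)
qed (auto simp: emeasure_lborel_Collect_eq_conj)

lemma set_cells: "unit_steps vs \<Longrightarrow> vs \<noteq> [] \<Longrightarrow> set (cells vs) = {Min (set vs) ..< Max (set vs)}"
proof (induction vs rule: cells.induct)
  case (1 v w vs)
  define a where "a = Min (set (w#vs))"
  define b where "b = Max (set (w#vs))"
  have ih: "set (cells (w#vs)) = {a ..< b}" using 1 by (simp add: a_def b_def)
  have mn: "a \<le> w" "w \<le> b" by (simp_all add: a_def b_def)
  have mm: "Min (set (v#w#vs)) = min v a" "Max (set (v#w#vs)) = max v b"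
    by (simp_all add: a_def b_def)
  have sc: "set (cells (v#w#vs)) = insert (min v w) {a..<b}" using ih by simp
  have vw: "v = Suc w \<or> w = Suc v" using 1(2) by auto
  show ?case
  proof (cases "v = Suc w")
    case True
    show ?thesis
    proof (cases "w < b")
      case True
      then show ?thesis unfolding sc mm using \<open>v = Suc w\<close> mn by (auto simp: min_def max_def)
    next
      case False
      then show ?thesis unfolding sc mm using \<open>v = Suc w\<close> mn by (auto simp: min_def max_def)
    qed
  next
    case False
    hence w: "w = Suc v" using vw by simp
    show ?thesis
    proof (cases "a < w")
      case True
      then show ?thesis unfolding sc mm using w mn by (auto simp: min_def max_def)
    next
      case False
      then show ?thesis unfolding sc mm using w mn by (auto simp: min_def max_def)
    qed
  qed
qed auto

function walk :: "nat \<Rightarrow> nat \<Rightarrow> nat list" where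
  "walk a b = (if a = b then [a] else if a < b then a # walk (Suc a) b else a # walk (a - 1) b)"
  by auto
termination by (relation "Wellfounded.measure (\<lambda>(a,b). if a \<le> b then b - a else a - b)") auto

declare walk.simps[simp del]

lemma walk_props: "walk a b \<noteq> [] \<and> hd (walk a b) = a \<and> last (walk a b) = b \<and> unit_steps (walk a b)
  \<and> set (walk a b) = {min a b..max a b}"
proof (induction a b rule: walk.induct)
  case (1 a b)
  show ?case
  proof (cases "a = b")
    case True
    then show ?thesis by (simp add: walk.simps)
  next
    case False
    show ?thesis
    proof (cases "a < b")
      case True
      hence ih: "walk (Suc a) b \<noteq> [] \<and> hd (walk (Suc a) b) = Suc a \<and> last (walk (Suc a) b) = b \<and> unit_steps (walk (Suc a) b)
         \<and> set (walk (Suc a) b) = {min (Suc a) b..max (Suc a) b}" using 1 False by simp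
      then obtain r where r: "walk (Suc a) b = Suc a # r" by (cases "walk (Suc a) b") auto
      have w: "walk a b = a # walk (Suc a) b" using False True by (subst walk.simps) simp
      have "set (walk a b) = {min a b..max a b}" using ih True unfolding w by auto
      then show ?thesis using ih unfolding w by (simp add: r)
    next
      case F2: False
      hence ih: "walk (a - 1) b \<noteq> [] \<and> hd (walk (a - 1) b) = a - 1 \<and> last (walk (a - 1) b) = b \<and> unit_steps (walk (a - 1) b)
         \<and> set (walk (a - 1) b) = {min (a - 1) b..max (a - 1) b}" using 1 False by simp
      then obtain r where r: "walk (a - 1) b = (a - 1) # r" by (cases "walk (a - 1) b") auto
      have w: "walk a b = a # walk (a - 1) b" using False F2 by (subst walk.simps) simp
      have a: "0 < a" using False F2 by simp
      have "set (walk a b) = {min a b..max a b}" using ih False F2 unfolding w by auto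
      moreover have "unit_steps (a # walk (a - 1) b)" using ih a unfolding r by simp
      ultimately show ?thesis using ih unfolding w by (simp add: r)
    qed
  qed
qed

lemma unit_steps_append_tl:
  assumes "unit_steps xs" "unit_steps ys" "xs \<noteq> []" "ys \<noteq> []" "last xs = hd ys"
  shows "unit_steps (xs @ tl ys)"
  using assms
proof (induction xs)
  case (Cons v vs)
  show ?case
  proof (cases vs)
    case Nil
    then show ?thesis using Cons by (cases ys) auto
  next
    case Cons2: (Cons u us)
    have "unit_steps (vs @ tl ys)" using Cons Cons2 by simp
    moreover have "(u = Suc v \<or> v = Suc u)" using Cons.prems Cons2 by simp
    ultimately show ?thesis using Cons2 by simp
  qed
qed simp

lemma append_tl_props:
  assumes "xs \<noteq> []" "ys \<noteq> []" "last xs = hd ys"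
  shows "xs @ tl ys \<noteq> [] \<and> hd (xs @ tl ys) = hd xs \<and> last (xs @ tl ys) = last ys \<and> set (xs @ tl ys) = set xs \<union> set ys"
proof -
  obtain y r where y: "ys = y # r" using assms by (cases ys) auto
  have "set ys = insert (last xs) (set r)" using assms y by simp
  moreover have "last xs \<in> set xs" using assms(1) by (rule last_in_set)
  ultimately show ?thesis using assms y by (cases r) auto
qed

definition detour :: "nat \<Rightarrow> nat \<Rightarrow> nat \<Rightarrow> nat \<Rightarrow> nat list" where
  "detour c P Q c' = (walk c P @ tl (walk P (Suc Q))) @ tl (walk (Suc Q) c')"

lemma detour_props:
  assumes "P < c" "c \<le> Q" "P < c'" "c' \<le> Q"
  shows "detour c P Q c' \<noteq> [] \<and> hd (detour c P Q c') = c \<and> last (detour c P Q c') = c' \<and> unit_steps (detour c P Q c')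
   \<and> set (detour c P Q c') = {P..Suc Q}"
proof -
  have w1: "walk c P \<noteq> [] \<and> hd (walk c P) = c \<and> last (walk c P) = P \<and> unit_steps (walk c P) \<and> set (walk c P) = {P..c}"
    using walk_props[of c P] assms by auto
  have w2: "walk P (Suc Q) \<noteq> [] \<and> hd (walk P (Suc Q)) = P \<and> last (walk P (Suc Q)) = Suc Q \<and> unit_steps (walk P (Suc Q)) \<and> set (walk P (Suc Q)) = {P..Suc Q}"
    using walk_props[of P "Suc Q"] assms by auto
  have w3: "walk (Suc Q) c' \<noteq> [] \<and> hd (walk (Suc Q) c') = Suc Q \<and> last (walk (Suc Q) c') = c' \<and> unit_steps (walk (Suc Q) c') \<and> set (walk (Suc Q) c') = {c'..Suc Q}"
    using walk_props[of "Suc Q" c'] assms by auto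
  have a12: "unit_steps (walk c P @ tl (walk P (Suc Q)))"
    by (rule unit_steps_append_tl) (use w1 w2 in simp_all)
  have c12: "walk c P @ tl (walk P (Suc Q)) \<noteq> [] \<and> hd (walk c P @ tl (walk P (Suc Q))) = c \<and> last (walk c P @ tl (walk P (Suc Q))) = Suc Q
     \<and> set (walk c P @ tl (walk P (Suc Q))) = {P..c} \<union> {P..Suc Q}"
  proof -
    have e: "last (walk c P) = hd (walk P (Suc Q))" using w1 w2 by simp
    have n: "walk c P \<noteq> []" "walk P (Suc Q) \<noteq> []" using w1 w2 by simp_all
    show ?thesis using append_tl_props[OF n e] w1 w2 by simp
  qed
  have a: "unit_steps (detour c P Q c')" unfolding detour_def
    by (rule unit_steps_append_tl[OF a12]) (use c12 w3 in simp_all)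
  have c: "detour c P Q c' \<noteq> [] \<and> hd (detour c P Q c') = c \<and> last (detour c P Q c') = c'
     \<and> set (detour c P Q c') = ({P..c} \<union> {P..Suc Q}) \<union> {c'..Suc Q}"
  proof -
    have e: "last (walk c P @ tl (walk P (Suc Q))) = hd (walk (Suc Q) c')" using c12 w3 by simp
    have n: "walk c P @ tl (walk P (Suc Q)) \<noteq> []" "walk (Suc Q) c' \<noteq> []" using c12 w3 by simp_all
    show ?thesis unfolding detour_def using append_tl_props[OF n e] c12 w3 by simp
  qed
  have "({P..c} \<union> {P..Suc Q}) \<union> {c'..Suc Q} = {P..Suc Q}" using assms by auto
  then show ?thesis using a c by simp
qed

section \<open>A piecewise affine measure-preserving approximation\<close>

definition near :: "nat \<Rightarrow> nat \<Rightarrow> bool" where "near i j \<longleftrightarrow> i \<le> j + 2 \<and> j \<le> i + 2"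

text \<open>The cells \<open>H j\<close> (\<open>j < n\<close>) partition \<open>I01\<close>: they are half-open except the last one, which is
  closed. \<open>J j\<close> is the closure of \<open>H j\<close>, and \<open>cell_index x\<close> the cell containing \<open>x\<close>.\<close>
locale grid_approx =
  fixes f :: "real \<Rightarrow> real" and n :: nat
  assumes f_C: "f \<in> C_lambda" and n_ge_2: "n \<ge> 2"
begin

definition "h = 1 / real n"
definition H :: "nat \<Rightarrow> real set" where
  "H j = (if j = n - 1 then {real j * h .. 1} else {real j * h ..< real (Suc j) * h})"
definition J :: "nat \<Rightarrow> real set" where "J j = {real j * h .. real (Suc j) * h}"
definition cell_index :: "real \<Rightarrow> nat" where "cell_index x = min (n - 1) (nat \<lfloor>x * real n\<rfloor>)"

lemma h_pos: "h > 0" using n_ge_2 by (simp add: h_def)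
lemma n_mult_h: "real n * h = 1" using n_ge_2 by (simp add: h_def)
lemma f_cont: "continuous_on I01 f" using f_C by (simp add: C_lambda_def)
lemma f_I01: "x \<in> I01 \<Longrightarrow> f x \<in> I01" using f_C by (auto simp: C_lambda_def)
lemma f_preserves: "A \<in> sets borel \<Longrightarrow> A \<subseteq> I01 \<Longrightarrow> emeasure lborel {x \<in> I01. f x \<in> A} = emeasure lborel A"
  using f_C by (auto simp: C_lambda_def)

lemma n_minus_1_mult_h: "real (n - 1) * h = 1 - h"
  using n_ge_2 n_mult_h by (simp add: of_nat_diff algebra_simps)

lemma H_subset_J: "H j \<subseteq> J j"
proof (cases "j = n - 1")
  case True
  hence "Suc j = n" using n_ge_2 by simp
  hence "real (Suc j) * h = 1" using n_mult_h by simp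
  then show ?thesis using True by (auto simp: H_def J_def)
qed (auto simp: H_def J_def)

lemma mult_h_le_iff: "a * h \<le> x \<longleftrightarrow> a \<le> x * real n" using n_ge_2 by (simp add: h_def field_simps)
lemma less_mult_h_iff: "x < a * h \<longleftrightarrow> x * real n < a" using n_ge_2 by (simp add: h_def field_simps)

lemma mult_h_mono: "a \<le> b \<Longrightarrow> a * h \<le> b * h" using h_pos by (simp add: mult_right_mono)

lemma cell_index_less: "cell_index x < n" using n_ge_2 by (simp add: cell_index_def)

lemma mem_H_iff:
  assumes "j < n"
  shows "x \<in> H j \<longleftrightarrow> x \<in> I01 \<and> cell_index x = j"
proof (cases "j = n - 1")
  case True
  have "x \<in> H j \<longleftrightarrow> real (n - 1) \<le> x * real n \<and> x \<le> 1"
    using True by (simp add: H_def mult_h_le_iff)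
  also have "\<dots> \<longleftrightarrow> x \<in> I01 \<and> cell_index x = j"
  proof
    assume a: "real (n - 1) \<le> x * real n \<and> x \<le> 1"
    hence "0 \<le> x * real n" by (meson of_nat_0_le_iff order_trans)
    hence "x \<ge> 0" using n_ge_2 by (simp add: zero_le_mult_iff)
    moreover have "nat \<lfloor>x * real n\<rfloor> \<ge> n - 1" using a by (simp add: le_nat_floor)
    ultimately show "x \<in> I01 \<and> cell_index x = j" using a True by (auto simp: I01_def cell_index_def)
  next
    assume a: "x \<in> I01 \<and> cell_index x = j"
    hence "nat \<lfloor>x * real n\<rfloor> \<ge> n - 1" using True n_ge_2 by (auto simp: cell_index_def min_def split: if_splits)
    moreover have "0 \<le> x * real n" using a by (simp add: I01_def)
    ultimately have "real (n - 1) \<le> x * real n"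
      using of_nat_floor[of "x * real n"] by (meson of_nat_le_iff order_trans)
    then show "real (n - 1) \<le> x * real n \<and> x \<le> 1" using a by (auto simp: I01_def)
  qed
  finally show ?thesis .
next
  case False
  hence jn: "Suc j \<le> n - 1" using assms by simp
  have "x \<in> H j \<longleftrightarrow> real j \<le> x * real n \<and> x * real n < real (Suc j)"
    using False by (simp add: H_def mult_h_le_iff less_mult_h_iff)
  also have "\<dots> \<longleftrightarrow> \<lfloor>x * real n\<rfloor> = int j" by (simp add: floor_eq_iff add.commute)
  also have "\<dots> \<longleftrightarrow> x \<in> I01 \<and> cell_index x = j"
  proof
    assume a: "\<lfloor>x * real n\<rfloor> = int j"
    hence b: "real j \<le> x * real n \<and> x * real n < real (Suc j)" by (simp add: floor_eq_iff)
    hence "0 \<le> x * real n" by (meson of_nat_0_le_iff order_trans)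
    hence "x \<ge> 0" using n_ge_2 by (simp add: zero_le_mult_iff)
    moreover have "real (Suc j) \<le> real n" using jn by simp
    hence "x * real n \<le> real n" using b by linarith
    hence "x \<le> 1" using n_ge_2 by (simp add: mult_le_cancel_right2)
    ultimately show "x \<in> I01 \<and> cell_index x = j" using a jn by (auto simp: I01_def cell_index_def)
  next
    assume a: "x \<in> I01 \<and> cell_index x = j"
    hence "x \<ge> 0" by (simp add: I01_def)
    hence "\<lfloor>x * real n\<rfloor> \<ge> 0" by simp
    moreover have "nat \<lfloor>x * real n\<rfloor> = j" using a jn by (auto simp: cell_index_def min_def split: if_splits)
    ultimately show "\<lfloor>x * real n\<rfloor> = int j" by (metis nat_0_le)
  qed
  finally show ?thesis .
qed

lemma H_subset_I01: "j < n \<Longrightarrow> H j \<subseteq> I01"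
proof
  fix x assume "j < n" "x \<in> H j"
  then show "x \<in> I01" using mem_H_iff[of j x] by simp
qed
lemma mem_H_cell_index: "x \<in> I01 \<Longrightarrow> x \<in> H (cell_index x)"
  using mem_H_iff[OF cell_index_less, of x x] by simp
lemma H_disjoint: "j < n \<Longrightarrow> k < n \<Longrightarrow> j \<noteq> k \<Longrightarrow> H j \<inter> H k = {}"
proof (rule equals0I)
  fix x assume "j < n" "k < n" "j \<noteq> k" "x \<in> H j \<inter> H k"
  then show False using mem_H_iff[of j x] mem_H_iff[of k x] by simp
qed
lemma sets_H[simp]: "H j \<in> sets borel" by (simp add: H_def)
lemma I01_eq_Union_H: "I01 = (\<Union>j<n. H j)"
proof
  show "I01 \<subseteq> (\<Union>j<n. H j)" using mem_H_cell_index cell_index_less by blast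
  show "(\<Union>j<n. H j) \<subseteq> I01" using H_subset_I01 by blast
qed

lemma emeasure_H: "j < n \<Longrightarrow> emeasure lborel (H j) = ennreal h"
proof (cases "j = n - 1")
  case True
  hence "1 - real j * h = h" using n_minus_1_mult_h by simp
  then show ?thesis using True h_pos by (simp add: H_def)
next
  case False
  then show ?thesis using h_pos by (simp add: H_def algebra_simps)
qed

lemma measure_H: "j < n \<Longrightarrow> measure lborel (H j) = h"
  using emeasure_H h_pos by (simp add: measure_def)

lemma J_subset_I01: "j < n \<Longrightarrow> J j \<subseteq> I01"
proof -
  assume "j < n"
  hence "real (Suc j) \<le> real n" by simp
  hence "real (Suc j) * h \<le> 1" using n_mult_h h_pos by (metis mult_right_mono less_imp_le)
  moreover have "0 \<le> real j * h" using h_pos by simp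
  ultimately show ?thesis by (auto simp: J_def I01_def)
qed

lemma J_Diff_H: "j < n \<Longrightarrow> J j - H j \<subseteq> {real (Suc j) * h}"
proof (cases "j = n - 1")
  case True
  hence "Suc j = n" using n_ge_2 by simp
  hence "real (Suc j) * h = 1" using n_mult_h by simp
  then show ?thesis using True by (auto simp: H_def J_def)
qed (auto simp: H_def J_def)

lemma sets_J[simp]: "J j \<in> sets borel" by (simp add: J_def)

definition A :: "nat \<Rightarrow> nat \<Rightarrow> real" where
  "A k j = real n * measure lborel {x \<in> H k. f x \<in> H j}"

lemma sets_H_vimage: "k < n \<Longrightarrow> S \<in> sets borel \<Longrightarrow> {x \<in> H k. f x \<in> S} \<in> sets borel"
proof -
  assume k: "k < n" and S: "S \<in> sets borel"
  have "{x \<in> H k. f x \<in> S} = H k \<inter> {x \<in> I01. f x \<in> S}" using H_subset_I01[OF k] by auto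
  then show ?thesis by (simp add: sets.Int sets_borel_vimage_I01[OF f_cont S])
qed

lemma emeasure_H_vimage_finite: "k < n \<Longrightarrow> S \<in> sets borel \<Longrightarrow> emeasure lborel {x \<in> H k. f x \<in> S} \<noteq> \<infinity>"
proof -
  assume k: "k < n" and S: "S \<in> sets borel"
  have "emeasure lborel {x \<in> H k. f x \<in> S} \<le> emeasure lborel (H k)"
    by (intro emeasure_mono) auto
  then show ?thesis using emeasure_H[OF k] by (auto simp: top_unique)
qed

lemma A_nonneg: "A k j \<ge> 0" by (simp add: A_def)

lemma A_row_sum: "k < n \<Longrightarrow> (\<Sum>j<n. A k j) = 1"
proof -
  assume k: "k < n"
  have U: "(\<Union>j<n. {x \<in> H k. f x \<in> H j}) = H k"
  proof
    show "(\<Union>j<n. {x \<in> H k. f x \<in> H j}) \<subseteq> H k" by auto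
    show "H k \<subseteq> (\<Union>j<n. {x \<in> H k. f x \<in> H j})"
    proof
      fix x assume x: "x \<in> H k"
      hence "f x \<in> I01" using H_subset_I01[OF k] f_I01 by auto
      then show "x \<in> (\<Union>j<n. {x \<in> H k. f x \<in> H j})" using x I01_eq_Union_H by auto
    qed
  qed
  have "measure lborel (\<Union>j<n. {x \<in> H k. f x \<in> H j}) = (\<Sum>j<n. measure lborel {x \<in> H k. f x \<in> H j})"
  proof (rule measure_finite_Union)
    show "disjoint_family_on (\<lambda>j. {x \<in> H k. f x \<in> H j}) {..<n}"
      using H_disjoint by (auto simp: disjoint_family_on_def)
  qed (use sets_H_vimage[OF k] emeasure_H_vimage_finite[OF k] in auto)
  hence "(\<Sum>j<n. measure lborel {x \<in> H k. f x \<in> H j}) = h" using U measure_H[OF k] by simp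
  then show ?thesis unfolding A_def by (simp add: sum_distrib_left[symmetric] n_mult_h)
qed

lemma A_col_sum: "j < n \<Longrightarrow> (\<Sum>k<n. A k j) = 1"
proof -
  assume j: "j < n"
  have U: "(\<Union>k<n. {x \<in> H k. f x \<in> H j}) = {x \<in> I01. f x \<in> H j}"
    using I01_eq_Union_H by auto
  have "measure lborel (\<Union>k<n. {x \<in> H k. f x \<in> H j}) = (\<Sum>k<n. measure lborel {x \<in> H k. f x \<in> H j})"
  proof (rule measure_finite_Union)
    show "disjoint_family_on (\<lambda>k. {x \<in> H k. f x \<in> H j}) {..<n}"
      using H_disjoint by (auto simp: disjoint_family_on_def)
  qed (use sets_H_vimage emeasure_H_vimage_finite in auto)
  moreover have "emeasure lborel {x \<in> I01. f x \<in> H j} = ennreal h"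
    using f_preserves[of "H j"] H_subset_I01[OF j] emeasure_H[OF j] by simp
  hence "measure lborel {x \<in> I01. f x \<in> H j} = h"
    using h_pos by (intro measure_eq_emeasure_eq_ennreal) auto
  ultimately have "(\<Sum>k<n. measure lborel {x \<in> H k. f x \<in> H j}) = h" using U by simp
  then show ?thesis unfolding A_def by (simp add: sum_distrib_left[symmetric] n_mult_h)
qed

lemma A_pos_witness: "k < n \<Longrightarrow> A k j > 0 \<Longrightarrow> \<exists>x\<in>H k. f x \<in> H j"
proof (rule ccontr)
  assume "A k j > 0" "\<not> (\<exists>x\<in>H k. f x \<in> H j)"
  hence e: "{x \<in> H k. f x \<in> H j} = {}" by blast
  have "A k j = 0" unfolding A_def by (simp only: e) simp
  then show False using \<open>A k j > 0\<close> by simp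
qed

lemma H_lower_interval: "k < n \<Longrightarrow> {real k * h ..< real (Suc k) * h} \<subseteq> H k"
  using n_mult_h by (auto simp: H_def)

lemma null_sets_A_eq_0:
  assumes k: "k < n" and "A k j = 0"
  shows "{x \<in> H k. f x \<in> H j} \<in> null_sets lborel"
proof -
  have "measure lborel {x \<in> H k. f x \<in> H j} = 0" using assms(2) n_ge_2 by (simp add: A_def)
  then have "emeasure lborel {x \<in> H k. f x \<in> H j} = 0"
    using emeasure_H_vimage_finite[OF k, of "H j"] by (simp add: emeasure_eq_ennreal_measure)
  then show ?thesis using sets_H_vimage[OF k, of "H j"] by (simp add: null_setsI)
qed

text \<open>Otherwise, by continuity of \<open>f\<close>, a whole subinterval of \<open>H k\<close> would be a null set.\<close>
lemma A_pos_meets_open: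
  assumes k: "k < n" and y: "y \<in> J k" and V: "open V" and fy: "f y \<in> V"
  shows "\<exists>j<n. A k j > 0 \<and> H j \<inter> V \<noteq> {}"
proof (rule ccontr)
  assume con: "\<not> (\<exists>j<n. A k j > 0 \<and> H j \<inter> V \<noteq> {})"
  obtain e where e: "e > 0" "ball (f y) e \<subseteq> V" using V fy open_contains_ball by blast
  have yI: "y \<in> I01" using y J_subset_I01[OF k] by auto
  obtain \<eta> where eta: "\<eta> > 0" "\<forall>x'\<in>I01. dist x' y < \<eta> \<longrightarrow> dist (f x') (f y) < e"
    using f_cont yI e(1) unfolding continuous_on_iff by blast
  define U where "U = {max (real k * h) (y - \<eta>) <..< min (real (Suc k) * h) (y + \<eta>)}"
  have "max (real k * h) (y - \<eta>) < min (real (Suc k) * h) (y + \<eta>)"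
    using y eta(1) h_pos by (auto simp: J_def algebra_simps)
  then have U_pos: "emeasure lborel U > 0" by (simp add: U_def)
  have U_sub: "U \<subseteq> (\<Union>j<n. {x \<in> H k. f x \<in> H j \<inter> V})"
  proof
    fix x assume x: "x \<in> U"
    then have xH: "x \<in> H k" using H_lower_interval[OF k] by (auto simp: U_def)
    then have xI: "x \<in> I01" using H_subset_I01[OF k] by auto
    have "dist x y < \<eta>" using x by (auto simp: U_def dist_real_def)
    then have "f x \<in> V" using eta(2) xI e(2) by (auto simp: dist_commute)
    moreover have "f x \<in> (\<Union>j<n. H j)" using f_I01[OF xI] I01_eq_Union_H by auto
    ultimately show "x \<in> (\<Union>j<n. {x \<in> H k. f x \<in> H j \<inter> V})" using xH by auto
  qed
  have "{x \<in> H k. f x \<in> H j \<inter> V} \<in> null_sets lborel" if j: "j < n" for j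
  proof (cases "A k j > 0")
    case True
    then have "H j \<inter> V = {}" using con j by auto
    then show ?thesis by simp
  next
    case False
    then have "A k j = 0" using A_nonneg[of k j] by simp
    moreover have "H j \<inter> V \<in> sets borel" by (intro sets.Int sets_H borel_open V)
    then have "{x \<in> H k. f x \<in> H j \<inter> V} \<in> sets lborel" using sets_H_vimage[OF k] by (simp only: sets_lborel)
    ultimately show ?thesis
      using null_sets_subset[OF null_sets_A_eq_0[OF k]] by blast
  qed
  then have N: "(\<Union>j<n. {x \<in> H k. f x \<in> H j \<inter> V}) \<in> null_sets lborel"
    by (intro null_sets_UN') auto
  have "U \<in> null_sets lborel" using null_sets_subset[OF N _ U_sub] by (simp add: U_def)
  then show False using U_pos by auto
qed

lemma A_pos_between:
  assumes k: "k < n" and j: "j1 < j" "j < j2" "j2 < n" and A1: "A k j1 > 0" and A2: "A k j2 > 0"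
  shows "A k j > 0"
proof -
  obtain x1 where x1: "x1 \<in> H k" "f x1 \<in> H j1" using A_pos_witness[OF k A1] by blast
  obtain x2 where x2: "x2 \<in> H k" "f x2 \<in> H j2" using A_pos_witness[OF k A2] by blast
  have j1n: "j1 \<noteq> n - 1" using j by simp
  have "f x1 < real (Suc j1) * h" using x1(2) j1n by (simp add: H_def)
  also have "\<dots> \<le> real j * h" using j h_pos by (intro mult_right_mono) auto
  finally have f1: "f x1 < real j * h + h / 2" using h_pos by simp
  have "real (Suc j) * h \<le> real j2 * h" using j h_pos by (intro mult_right_mono) auto
  also have "\<dots> \<le> f x2" using x2(2) by (auto simp: H_def split: if_splits)
  finally have f2: "real j * h + h / 2 < f x2" using h_pos by (simp add: algebra_simps)
  have x12: "x1 \<in> J k" "x2 \<in> J k" using x1 x2 H_subset_J by auto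
  have JI: "J k \<subseteq> I01" using J_subset_I01[OF k] .
  have "\<exists>y\<in>J k. f y = real j * h + h / 2"
  proof (cases "x1 \<le> x2")
    case True
    have sub: "{x1..x2} \<subseteq> J k" using x12 by (auto simp: J_def)
    have "continuous_on {x1..x2} f" using f_cont sub JI continuous_on_subset by blast
    then obtain y where "x1 \<le> y" "y \<le> x2" "f y = real j * h + h / 2"
      using IVT'[of f x1 "real j * h + h / 2" x2] f1 f2 True by auto
    then show ?thesis using sub by auto
  next
    case False
    have sub: "{x2..x1} \<subseteq> J k" using x12 by (auto simp: J_def)
    have "continuous_on {x2..x1} f" using f_cont sub JI continuous_on_subset by blast
    then obtain y where "x2 \<le> y" "y \<le> x1" "f y = real j * h + h / 2"
      using IVT2'[of f x1 "real j * h + h / 2" x2] f1 f2 False by auto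
    then show ?thesis using sub by auto
  qed
  then obtain y where y: "y \<in> J k" "f y = real j * h + h / 2" by blast
  define V where "V = {real j * h <..< real (Suc j) * h}"
  have V: "open V" "f y \<in> V" using y h_pos by (auto simp: V_def algebra_simps)
  have VH: "V \<subseteq> H j" using n_minus_1_mult_h by (auto simp: V_def H_def algebra_simps)
  obtain j' where j': "j' < n" "A k j' > 0" "H j' \<inter> V \<noteq> {}" using A_pos_meets_open[OF k y(1) V] by blast
  have "j' = j"
  proof (rule ccontr)
    assume "j' \<noteq> j"
    hence "H j' \<inter> H j = {}" using H_disjoint j' j by auto
    then show False using j'(3) VH by auto
  qed
  then show ?thesis using j' by simp
qed

definition T :: "nat \<Rightarrow> nat \<Rightarrow> real" where
  "T i j = (if near i j then 1/5 else 0) + (if i = j then (5 - real (card {j'. j' < n \<and> near i j'})) / 5 else 0)"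

lemma card_near: "card {j'. j' < n \<and> near i j'} \<le> 5"
proof -
  have "{j'. j' < n \<and> near i j'} \<subseteq> {i - 2 .. i + 2}" by (auto simp: near_def)
  hence "card {j'. j' < n \<and> near i j'} \<le> card {i - 2 .. i + 2}" by (intro card_mono) auto
  also have "\<dots> \<le> 5" by simp
  finally show ?thesis .
qed

lemma near_refl[simp]: "near i i" by (simp add: near_def)
lemma near_sym: "near i j = near j i" by (auto simp: near_def)

lemma card_near_real: "real (card {j'. j' < n \<and> near i j'}) \<le> 5"
  using card_near[of i] by (metis of_nat_le_iff of_nat_numeral)

lemma T_nonneg: "T i j \<ge> 0"
  using card_near_real[of i] by (auto simp: T_def)

lemma T_pos: "T i j > 0 \<longleftrightarrow> near i j"
proof
  assume "T i j > 0"
  then show "near i j" by (auto simp: T_def split: if_splits)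
next
  assume "near i j"
  moreover have "0 \<le> (if i = j then (5 - real (card {j'. j' < n \<and> near i j'})) / 5 else 0)"
    using card_near_real[of i] by auto
  ultimately show "T i j > 0" unfolding T_def by simp
qed

lemma T_sym: "T i j = T j i"
  by (auto simp: T_def near_sym)

lemma T_row_sum: "i < n \<Longrightarrow> (\<Sum>j<n. T i j) = 1"
proof -
  assume i: "i < n"
  have "(\<Sum>j<n. T i j) = (\<Sum>j<n. (if near i j then 1/5 else 0)) + (\<Sum>j<n. (if i = j then (5 - real (card {j'. j' < n \<and> near i j'})) / 5 else 0))"
    unfolding T_def by (simp add: sum.distrib)
  also have "(\<Sum>j<n. (if near i j then 1/5 else 0)) = (\<Sum>j\<in>{j\<in>{..<n}. near i j}. 1/5::real)"
    by (rule sum.inter_filter[symmetric]) simp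
  also have "\<dots> = real (card {j'. j' < n \<and> near i j'}) / 5"
  proof -
    have "{j\<in>{..<n}. near i j} = {j'. j' < n \<and> near i j'}" by auto
    then show ?thesis by simp
  qed
  also have "(\<Sum>j<n. (if i = j then (5 - real (card {j'. j' < n \<and> near i j'})) / 5 else 0)) = (5 - real (card {j'. j' < n \<and> near i j'})) / 5"
    using i by (simp add: sum.delta)
  finally show ?thesis by (simp add: field_simps)
qed

lemma T_col_sum: "j < n \<Longrightarrow> (\<Sum>i<n. T i j) = 1"
  using T_row_sum[of j] by (simp add: T_sym)

definition B :: "nat \<Rightarrow> nat \<Rightarrow> real" where
  "B k j = (\<Sum>j'<n. A k j' * T j' j)"

lemma B_nonneg: "B k j \<ge> 0"
  unfolding B_def by (intro sum_nonneg mult_nonneg_nonneg A_nonneg T_nonneg)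

lemma B_row_sum: "k < n \<Longrightarrow> (\<Sum>j<n. B k j) = 1"
proof -
  assume k: "k < n"
  have "(\<Sum>j<n. B k j) = (\<Sum>j'<n. \<Sum>j<n. A k j' * T j' j)"
    unfolding B_def by (rule sum.swap)
  also have "\<dots> = (\<Sum>j'<n. A k j' * (\<Sum>j<n. T j' j))"
    by (simp add: sum_distrib_left)
  also have "\<dots> = (\<Sum>j'<n. A k j')" by (simp add: T_row_sum)
  finally show ?thesis using A_row_sum[OF k] by simp
qed

lemma B_col_sum: "j < n \<Longrightarrow> (\<Sum>k<n. B k j) = 1"
proof -
  assume j: "j < n"
  have "(\<Sum>k<n. B k j) = (\<Sum>j'<n. \<Sum>k<n. A k j' * T j' j)"
    unfolding B_def by (rule sum.swap)
  also have "\<dots> = (\<Sum>j'<n. (\<Sum>k<n. A k j') * T j' j)"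
    by (simp add: sum_distrib_right)
  also have "\<dots> = (\<Sum>j'<n. T j' j)" by (simp add: A_col_sum)
  finally show ?thesis using T_col_sum[OF j] by simp
qed

lemma B_pos_iff: "B k j > 0 \<longleftrightarrow> (\<exists>j'<n. A k j' > 0 \<and> near j' j)"
proof
  assume "B k j > 0"
  hence "B k j \<noteq> 0" by simp
  then obtain j' where j': "j' \<in> {..<n}" "A k j' * T j' j \<noteq> 0" unfolding B_def
    using sum.not_neutral_contains_not_neutral by blast
  hence "A k j' \<noteq> 0" "T j' j \<noteq> 0" by auto
  hence "A k j' > 0" "T j' j > 0" using A_nonneg[of k j'] T_nonneg[of j' j] by linarith+
  then show "\<exists>j'<n. A k j' > 0 \<and> near j' j" using j'(1) T_pos by auto
next
  assume "\<exists>j'<n. A k j' > 0 \<and> near j' j"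
  then obtain j' where j': "j' < n" "A k j' > 0" "near j' j" by blast
  have "0 < A k j' * T j' j" using j' T_pos by simp
  also have "A k j' * T j' j \<le> B k j" unfolding B_def
    by (rule member_le_sum) (use j' in \<open>auto intro: mult_nonneg_nonneg A_nonneg T_nonneg\<close>)
  finally show "B k j > 0" .
qed

definition B_support :: "nat \<Rightarrow> nat set" where "B_support k = {j. j < n \<and> B k j > 0}"
definition P :: "nat \<Rightarrow> nat" where "P k = Min (B_support k)"
definition Q :: "nat \<Rightarrow> nat" where "Q k = Max (B_support k)"

lemma finite_B_support: "finite (B_support k)" by (simp add: B_support_def)
lemma B_support_nonempty: "k < n \<Longrightarrow> B_support k \<noteq> {}"
proof
  assume k: "k < n" and e: "B_support k = {}"
  have "\<forall>j<n. B k j = 0"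
  proof (intro allI impI)
    fix j assume "j < n"
    hence "\<not> B k j > 0" using e by (auto simp: B_support_def)
    then show "B k j = 0" using B_nonneg[of k j] by linarith
  qed
  hence "(\<Sum>j<n. B k j) = 0" by simp
  then show False using B_row_sum[OF k] by simp
qed

lemma P_Q_in_support: "k < n \<Longrightarrow> P k \<in> B_support k \<and> Q k \<in> B_support k \<and> P k \<le> Q k \<and> Q k < n"
proof -
  assume k: "k < n"
  have a: "P k \<in> B_support k" unfolding P_def using finite_B_support B_support_nonempty[OF k] by (rule Min_in)
  have b: "Q k \<in> B_support k" unfolding Q_def using finite_B_support B_support_nonempty[OF k] by (rule Max_in)
  have c: "P k \<le> Q k" unfolding P_def using finite_B_support b by (rule Min_le)
  have d: "Q k < n" using b by (simp add: B_support_def)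
  show ?thesis using a b c d by blast
qed

lemma B_support_bounds: "j \<in> B_support k \<Longrightarrow> P k \<le> j \<and> j \<le> Q k"
  unfolding P_def Q_def using finite_B_support[of k] by (simp add: Min_le Max_ge)

lemma B_pos_between:
  assumes k: "k < n" and j: "P k \<le> j" "j \<le> Q k"
  shows "B k j > 0"
proof -
  have pq: "P k \<in> B_support k" "Q k \<in> B_support k" "Q k < n" using P_Q_in_support[OF k] by auto
  obtain j1 where j1: "j1 < n" "A k j1 > 0" "near j1 (P k)" using pq(1) B_pos_iff by (auto simp: B_support_def)
  obtain j2 where j2: "j2 < n" "A k j2 > 0" "near j2 (Q k)" using pq(2) B_pos_iff by (auto simp: B_support_def)
  have jn: "j < n" using j pq by simp
  show ?thesis
  proof (cases "near j1 j")
    case True then show ?thesis using j1 B_pos_iff by auto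
  next
    case F1: False
    show ?thesis
    proof (cases "near j2 j")
      case True then show ?thesis using j2 B_pos_iff by auto
    next
      case False
      have "j1 < j" using F1 j1(3) j by (auto simp: near_def)
      moreover have "j < j2" using False j2(3) j by (auto simp: near_def)
      ultimately have "A k j > 0" using A_pos_between[OF k _ _ j2(1) j1(2) j2(2)] by blast
      then show ?thesis using jn B_pos_iff by auto
    qed
  qed
qed

lemma B_pos_iff_P_Q: "k < n \<Longrightarrow> j < n \<Longrightarrow> B k j > 0 \<longleftrightarrow> P k \<le> j \<and> j \<le> Q k"
proof -
  assume k: "k < n" and j: "j < n"
  show ?thesis
  proof
    assume "B k j > 0" then show "P k \<le> j \<and> j \<le> Q k" using B_support_bounds j by (simp add: B_support_def)
  next
    assume "P k \<le> j \<and> j \<le> Q k" then show "B k j > 0" using B_pos_between[OF k] by blast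
  qed
qed

text \<open>The grid point \<open>anchor k * h\<close> is within \<open>h\<close> of \<open>f (k * h)\<close>; the clamping to \<open>[1, n - 1]\<close>
  leaves room for one cell on either side.\<close>
definition anchor :: "nat \<Rightarrow> nat" where
  "anchor k = max 1 (min (n - 1) (nat \<lfloor>f (real k * h) * real n\<rfloor>))"

lemma anchor_range: "1 \<le> anchor k \<and> anchor k \<le> n - 1" using n_ge_2 by (simp add: anchor_def)

lemma grid_point_I01: "k \<le> n \<Longrightarrow> real k * h \<in> I01"
proof -
  assume "k \<le> n"
  hence "real k * h \<le> real n * h" using h_pos by (intro mult_right_mono) auto
  then show ?thesis using n_mult_h h_pos by (simp add: I01_def)
qed

lemma anchor_close: "k \<le> n \<Longrightarrow> \<bar>real (anchor k) * h - f (real k * h)\<bar> \<le> h"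
proof -
  assume k: "k \<le> n"
  define y where "y = f (real k * h)"
  have yI: "0 \<le> y" "y \<le> 1" using f_I01[OF grid_point_I01[OF k]] by (auto simp: y_def I01_def)
  define m where "m = nat \<lfloor>y * real n\<rfloor>"
  have yn0: "0 \<le> y * real n" using yI by simp
  have m1: "real m \<le> y * real n" using yn0 by (simp add: m_def of_nat_floor)
  have m2: "y * real n < real m + 1" using yn0 by (simp add: m_def)
  have yn: "y * real n \<le> real n" using yI n_ge_2 by (simp add: mult_le_cancel_right1)
  have ccm: "anchor k = max 1 (min (n - 1) m)" by (simp add: anchor_def y_def m_def)
  have r1: "real (n - 1) = real n - 1" using n_ge_2 by (simp add: of_nat_diff)
  have "real (anchor k) \<le> y * real n + 1 \<and> y * real n \<le> real (anchor k) + 1"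
  proof (cases "m = 0")
    case True
    then show ?thesis using ccm m2 yn0 n_ge_2 by (simp add: max_def min_def)
  next
    case False
    show ?thesis
    proof (cases "m \<le> n - 1")
      case True
      hence "anchor k = m" using False ccm by simp
      then show ?thesis using m1 m2 by simp
    next
      case F2: False
      hence "anchor k = n - 1" using ccm n_ge_2 by simp
      moreover have "real n - 1 \<le> y * real n" using F2 m1 by (simp add: r1)
      ultimately show ?thesis using yn r1 by simp
    qed
  qed
  hence "\<bar>real (anchor k) - y * real n\<bar> \<le> 1" by linarith
  hence "\<bar>real (anchor k) - y * real n\<bar> * h \<le> h" using h_pos by simp
  moreover have "(real (anchor k) - y * real n) * h = real (anchor k) * h - y"
    using n_mult_h by (simp add: algebra_simps)
  hence "\<bar>real (anchor k) - y * real n\<bar> * h = \<bar>real (anchor k) * h - y\<bar>"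
    using h_pos by (metis abs_mult abs_of_pos)
  ultimately show ?thesis by (simp add: y_def)
qed

lemma P_less_anchor_le_Q:
  assumes k: "k < n" and k': "k' = k \<or> k' = Suc k"
  shows "P k < anchor k' \<and> anchor k' \<le> Q k"
proof -
  define y where "y = real k' * h"
  have yJ: "y \<in> J k" using k' h_pos by (auto simp: y_def J_def)
  have k'n: "k' \<le> n" using k k' by auto
  obtain j' where j': "j' < n" "A k j' > 0" "H j' \<inter> ball (f y) h \<noteq> {}"
    using A_pos_meets_open[OF k yJ, of "ball (f y) h"] h_pos by auto
  then obtain u where u: "u \<in> H j'" "dist (f y) u < h" by auto
  have "u \<in> J j'" using u(1) H_subset_J by blast
  hence uJ: "real j' * h \<le> u" "u \<le> real (Suc j') * h" by (simp_all add: J_def)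
  have cl: "\<bar>real (anchor k') * h - f y\<bar> \<le> h" using anchor_close[OF k'n] by (simp add: y_def)
  have d: "\<bar>f y - u\<bar> < h" using u(2) by (simp add: dist_real_def)
  have "real (anchor k') * h < real (j' + 3) * h" using uJ d cl by (simp add: algebra_simps abs_less_iff abs_le_iff)
  hence "real (anchor k') < real (j' + 3)" using mult_less_cancel_right_pos[OF h_pos] by blast
  hence a: "anchor k' \<le> j' + 2" by simp
  have "real j' * h < real (anchor k' + 2) * h" using uJ d cl by (simp add: algebra_simps abs_less_iff abs_le_iff)
  hence "real j' < real (anchor k' + 2)" using mult_less_cancel_right_pos[OF h_pos] by blast
  hence b: "j' \<le> anchor k' + 1" by simp
  have cr: "1 \<le> anchor k'" "anchor k' \<le> n - 1" using anchor_range by auto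
  have "near j' (anchor k' - 1)" "near j' (anchor k')" using a b cr by (auto simp: near_def)
  hence "B k (anchor k' - 1) > 0" "B k (anchor k') > 0" using j' B_pos_iff by auto
  moreover have "anchor k' - 1 < n" "anchor k' < n" using cr n_ge_2 by auto
  ultimately have "P k \<le> anchor k' - 1" "anchor k' \<le> Q k" using B_pos_iff_P_Q[OF k] by auto
  then show ?thesis using cr by auto
qed

lemma anchor_margin:
  assumes k: "k < n" and k': "k' = k \<or> k' = Suc k"
  shows "real (P k) * h + h \<le> real (anchor k') * h \<and> real (anchor k') * h + h \<le> real (Suc (Q k)) * h"
proof -
  have a: "real (P k) + 1 \<le> real (anchor k')" "real (anchor k') + 1 \<le> real (Suc (Q k))"
    using P_less_anchor_le_Q[OF k k'] by auto
  show ?thesis using mult_h_mono[OF a(1)] mult_h_mono[OF a(2)] by (simp add: algebra_simps)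
qed

definition route :: "nat \<Rightarrow> nat list" where
  "route k = detour (anchor k) (P k) (Q k) (anchor (Suc k))"

lemma route_props: "k < n \<Longrightarrow> route k \<noteq> [] \<and> hd (route k) = anchor k \<and> last (route k) = anchor (Suc k) \<and> unit_steps (route k)
   \<and> set (route k) = {P k..Suc (Q k)}"
  unfolding route_def using P_less_anchor_le_Q[of k k] P_less_anchor_le_Q[of k "Suc k"] by (intro detour_props) auto

lemma route_Min_Max: "k < n \<Longrightarrow> Min (set (route k)) = P k \<and> Max (set (route k)) = Suc (Q k)"
proof -
  assume k: "k < n"
  have s: "set (route k) = {P k..Suc (Q k)}" using route_props[OF k] by simp
  have "P k \<le> Suc (Q k)" using P_Q_in_support[OF k] by simp
  have "Min {P k..Suc (Q k)} = P k" using \<open>P k \<le> Suc (Q k)\<close> by (intro Min_eqI) auto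
  moreover have "Max {P k..Suc (Q k)} = Suc (Q k)" using \<open>P k \<le> Suc (Q k)\<close> by (intro Max_eqI) auto
  ultimately show ?thesis unfolding s by simp
qed

lemma set_cells_route: "k < n \<Longrightarrow> set (cells (route k)) = {P k..Q k}"
proof -
  assume k: "k < n"
  have v: "unit_steps (route k)" "route k \<noteq> []" using route_props[OF k] by auto
  have "set (cells (route k)) = {Min (set (route k)) ..< Max (set (route k))}"
    using set_cells[OF v] .
  also have "\<dots> = {P k..<Suc (Q k)}" using route_Min_Max[OF k] by simp
  also have "\<dots> = {P k..Q k}" by auto
  finally show ?thesis .
qed

text \<open>The time \<open>B k j * h\<close> that \<open>F\<close> is to spend in cell \<open>j\<close> is shared equally among the steps of
  \<open>route k\<close> across that cell.\<close>
definition step_len :: "nat \<Rightarrow> nat \<Rightarrow> real" where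
  "step_len k j = B k j * h / real (count_list (cells (route k)) j)"

lemma pos_on_cells_route: "k < n \<Longrightarrow> pos_on_cells (step_len k) (route k)"
  unfolding pos_on_cells_def
proof
  fix j assume k: "k < n" and j: "j \<in> set (cells (route k))"
  hence "P k \<le> j" "j \<le> Q k" using set_cells_route[OF k] by auto
  hence "B k j > 0" using B_pos_between[OF k] by auto
  moreover have "count_list (cells (route k)) j > 0" using j by (metis count_list_0_iff neq0_conv)
  ultimately show "step_len k j > 0" using h_pos by (simp add: step_len_def)
qed

lemma sum_B_P_Q: "k < n \<Longrightarrow> (\<Sum>j\<in>{P k..Q k}. B k j) = 1"
proof -
  assume k: "k < n"
  have "(\<Sum>j<n. B k j) = (\<Sum>j\<in>{P k..Q k}. B k j)"
  proof (rule sum.mono_neutral_right)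
    show "{P k..Q k} \<subseteq> {..<n}" using P_Q_in_support[OF k] by auto
    show "\<forall>i\<in>{..<n} - {P k..Q k}. B k i = 0"
    proof
      fix i assume "i \<in> {..<n} - {P k..Q k}"
      hence "\<not> B k i > 0" using B_pos_iff_P_Q[OF k] by auto
      then show "B k i = 0" using B_nonneg[of k i] by linarith
    qed
  qed simp
  then show ?thesis using B_row_sum[OF k] by simp
qed

lemma count_mult_step_len:
  assumes "k < n" "j \<in> {P k..Q k}"
  shows "real (count_list (cells (route k)) j) * step_len k j = B k j * h"
proof -
  have "j \<in> set (cells (route k))" using assms set_cells_route by blast
  then have "count_list (cells (route k)) j > 0" by (metis count_list_0_iff neq0_conv)
  then show ?thesis by (simp add: step_len_def)
qed

lemma zigzag_end_route: "k < n \<Longrightarrow> zigzag_end (step_len k) (real k * h) (route k) = real (Suc k) * h"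
proof -
  assume k: "k < n"
  have "sum_list (map (step_len k) (cells (route k))) = (\<Sum>j\<in>set (cells (route k)). real (count_list (cells (route k)) j) * step_len k j)"
    by (rule sum_list_map_eq_sum_count_of_nat)
  also have "\<dots> = (\<Sum>j\<in>{P k..Q k}. B k j * h)"
    using count_mult_step_len[OF k] by (simp add: set_cells_route[OF k])
  also have "\<dots> = h" using sum_B_P_Q[OF k] by (simp add: sum_distrib_right[symmetric])
  finally show ?thesis by (simp add: zigzag_end_def algebra_simps)
qed

lemma sum_list_cells_route:
  assumes k: "k < n"
  shows "sum_list (map (\<lambda>j. ennreal (step_len k j / h) * \<phi> j) (cells (route k))) = (\<Sum>j<n. ennreal (B k j) * \<phi> j)"
proof -
  have "sum_list (map (\<lambda>j. ennreal (step_len k j / h) * \<phi> j) (cells (route k)))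
     = (\<Sum>j\<in>{P k..Q k}. of_nat (count_list (cells (route k)) j) * (ennreal (step_len k j / h) * \<phi> j))"
    unfolding sum_list_map_eq_sum_count_of_nat set_cells_route[OF k] ..
  also have "\<dots> = (\<Sum>j\<in>{P k..Q k}. ennreal (B k j) * \<phi> j)"
  proof (rule sum.cong)
    fix j assume j: "j \<in> {P k..Q k}"
    have "of_nat (count_list (cells (route k)) j) * ennreal (step_len k j / h)
        = ennreal (real (count_list (cells (route k)) j) * step_len k j / h)"
      using B_nonneg[of k j] h_pos
      by (simp add: ennreal_of_nat_eq_real_of_nat ennreal_mult'[symmetric] step_len_def)
    also have "\<dots> = ennreal (B k j)" using count_mult_step_len[OF k j] h_pos by simp
    finally show "of_nat (count_list (cells (route k)) j) * (ennreal (step_len k j / h) * \<phi> j)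
        = ennreal (B k j) * \<phi> j" by (simp add: mult.assoc[symmetric])
  qed simp
  also have "\<dots> = (\<Sum>j<n. ennreal (B k j) * \<phi> j)"
  proof (rule sum.mono_neutral_left)
    show "{P k..Q k} \<subseteq> {..<n}" using P_Q_in_support[OF k] by auto
    show "\<forall>i\<in>{..<n} - {P k..Q k}. ennreal (B k i) * \<phi> i = 0"
    proof
      fix i assume "i \<in> {..<n} - {P k..Q k}"
      then have "\<not> B k i > 0" using B_pos_iff_P_Q[OF k] by auto
      then have "B k i = 0" using B_nonneg[of k i] by linarith
      then show "ennreal (B k i) * \<phi> i = 0" by simp
    qed
  qed simp
  finally show ?thesis .
qed

definition F_piece :: "nat \<Rightarrow> real \<Rightarrow> real" where
  "F_piece k = zigzag h (step_len k) (real k * h) (route k)"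

definition F :: "real \<Rightarrow> real" where
  "F x = F_piece (cell_index x) x"

lemma J_eq_zigzag_domain: "k < n \<Longrightarrow> J k = {real k * h .. zigzag_end (step_len k) (real k * h) (route k)}"
  using zigzag_end_route by (simp add: J_def)

lemma F_piece_start: "k < n \<Longrightarrow> F_piece k (real k * h) = real (anchor k) * h"
  using route_props[of k] pos_on_cells_route[of k] by (simp add: F_piece_def zigzag_start)

lemma F_piece_end: "k < n \<Longrightarrow> F_piece k (real (Suc k) * h) = real (anchor (Suc k)) * h"
  using route_props[of k] pos_on_cells_route[of k] zigzag_at_end[of "step_len k" "route k" h "real k * h"] zigzag_end_route[of k]
  by (simp add: F_piece_def)

lemma mem_J_cell_index: "x \<in> I01 \<Longrightarrow> x \<in> J (cell_index x)"
  using mem_H_cell_index H_subset_J by blast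

lemma F_eq_F_piece:
  assumes k: "k < n" and x: "x \<in> J k"
  shows "F x = F_piece k x"
proof (cases "x \<in> H k")
  case True
  hence "cell_index x = k" using mem_H_iff[OF k] by simp
  then show ?thesis by (simp add: F_def)
next
  case False
  hence xe: "x = real (Suc k) * h" using J_Diff_H[OF k] x by auto
  have k1: "Suc k < n"
  proof (rule ccontr)
    assume "\<not> Suc k < n"
    hence "k = n - 1" using k by simp
    hence "H k = J k"
      using n_mult_h n_ge_2 by (auto simp: H_def J_def)
    then show False using False x by simp
  qed
  have "real (Suc k) * h \<in> I01" using k1 by (intro grid_point_I01) simp
  hence "x \<in> H (Suc k)" using xe k1 h_pos by (auto simp: H_def I01_def)
  hence "cell_index x = Suc k" using mem_H_iff[OF k1] by simp
  hence "F x = F_piece (Suc k) (real (Suc k) * h)" by (simp add: F_def xe)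
  also have "\<dots> = real (anchor (Suc k)) * h" using F_piece_start[OF k1] .
  also have "\<dots> = F_piece k x" using F_piece_end[OF k] xe by simp
  finally show ?thesis .
qed

lemma F_grid_point: "k \<le> n \<Longrightarrow> F (real k * h) = real (anchor k) * h"
proof (cases "k < n")
  case True
  then show ?thesis using F_eq_F_piece[OF True] F_piece_start[OF True] h_pos by (simp add: J_def)
next
  case False
  assume "k \<le> n"
  hence kn: "k = Suc (n - 1)" using False n_ge_2 by simp
  have l: "n - 1 < n" using n_ge_2 by simp
  have "real k * h \<in> J (n - 1)" using kn h_pos by (auto simp: J_def)
  hence "F (real k * h) = F_piece (n - 1) (real k * h)" using F_eq_F_piece[OF l] by blast
  also have "\<dots> = real (anchor k) * h" using F_piece_end[OF l] kn by simp
  finally show ?thesis .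
qed

lemma continuous_on_F_piece: "k < n \<Longrightarrow> continuous_on (J k) (F_piece k)"
  using continuous_on_zigzag[OF pos_on_cells_route[of k]] J_eq_zigzag_domain[of k] by (simp add: F_piece_def)

lemma continuous_on_F_J: "k < n \<Longrightarrow> continuous_on (J k) F"
proof -
  assume k: "k < n"
  show ?thesis by (rule continuous_on_eq[OF continuous_on_F_piece[OF k]]) (simp add: F_eq_F_piece[OF k])
qed

lemma continuous_on_F: "continuous_on I01 F"
proof -
  have "m \<le> n \<Longrightarrow> continuous_on {0..real m * h} F" for m
  proof (induction m)
    case 0
    then show ?case by simp
  next
    case (Suc m)
    hence m: "m < n" by simp
    obtain c where c: "c = real m * h" by blast
    have c0: "0 \<le> c" using h_pos c by simp
    have c1: "real (Suc m) * h = c + h" using c by (simp add: algebra_simps)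
    have "{0..c + h} = {0..c} \<union> {c..c+h}" using c0 h_pos by auto
    hence "{0..real (Suc m) * h} = {0..real m * h} \<union> J m"
      unfolding J_def c1 c[symmetric] by simp
    moreover have "continuous_on ({0..real m * h} \<union> J m) F"
      using Suc m continuous_on_F_J[OF m] by (intro continuous_on_closed_Un) (auto simp: J_def)
    ultimately show ?case by simp
  qed
  from this[of n] show ?thesis using n_mult_h by (simp add: I01_def)
qed

lemma F_range:
  assumes k: "k < n" and x: "x \<in> J k"
  shows "real (P k) * h \<le> F x \<and> F x \<le> real (Suc (Q k)) * h"
proof -
  have "real (Min (set (route k))) * h \<le> F_piece k x \<and> F_piece k x \<le> real (Max (set (route k))) * h"
    unfolding F_piece_def using route_props[OF k] pos_on_cells_route[OF k] x J_eq_zigzag_domain[OF k] h_pos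
    by (intro zigzag_range) auto
  then show ?thesis using route_Min_Max[OF k] F_eq_F_piece[OF k x] by simp
qed

lemma F_attains_P_Q:
  assumes k: "k < n" and u: "u = P k \<or> u = Suc (Q k)"
  shows "\<exists>t\<in>J k. F t = real u * h"
proof -
  have "u \<in> set (route k)" using route_props[OF k] u P_Q_in_support[OF k] by auto
  then obtain t where t: "t \<in> J k" "F_piece k t = real u * h"
    using zigzag_attains[OF pos_on_cells_route[OF k]] J_eq_zigzag_domain[OF k] unfolding F_piece_def by blast
  then show ?thesis using F_eq_F_piece[OF k] by auto
qed

lemma F_I01: "x \<in> I01 \<Longrightarrow> F x \<in> I01"
proof -
  assume x: "x \<in> I01"
  define k where "k = cell_index x"
  have k: "k < n" by (simp add: k_def cell_index_less)
  have r: "real (P k) * h \<le> F x \<and> F x \<le> real (Suc (Q k)) * h"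
    using F_range[OF k] mem_J_cell_index[OF x] by (simp add: k_def)
  have "real (Suc (Q k)) * h \<le> real n * h" using P_Q_in_support[OF k] h_pos by (intro mult_right_mono) auto
  moreover have "0 \<le> real (P k) * h" using h_pos by simp
  ultimately show ?thesis using r n_mult_h unfolding I01_def by auto
qed

definition F_knots :: "real set" where "F_knots = (\<Union>k<n. zigzag_knots (step_len k) (real k * h) (route k))"

lemma piecewise_affine_F: "piecewise_affine F"
  unfolding piecewise_affine_def
proof (intro exI[of _ F_knots] conjI ballI)
  show "finite F_knots" unfolding F_knots_def using zigzag_knots_props pos_on_cells_route by auto
  fix x assume x: "x \<in> I01 - F_knots"
  define k where "k = cell_index x"
  have k: "k < n" by (simp add: k_def cell_index_less)
  have xH: "x \<in> H k" using x mem_H_cell_index by (simp add: k_def)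
  hence xJ: "x \<in> J k" using H_subset_J by auto
  have kn: "zigzag_knots (step_len k) (real k * h) (route k) \<subseteq> F_knots" using k by (auto simp: F_knots_def)
  have kp: "real k * h \<in> zigzag_knots (step_len k) (real k * h) (route k)" "zigzag_end (step_len k) (real k * h) (route k) \<in> zigzag_knots (step_len k) (real k * h) (route k)"
    using zigzag_knots_props[OF pos_on_cells_route[OF k]] by auto
  have "x \<in> {real k * h <..< zigzag_end (step_len k) (real k * h) (route k)} - zigzag_knots (step_len k) (real k * h) (route k)"
  proof -
    have "x \<notin> zigzag_knots (step_len k) (real k * h) (route k)" using x kn by auto
    hence "x \<noteq> real k * h" "x \<noteq> zigzag_end (step_len k) (real k * h) (route k)" using kp by auto
    then show ?thesis using xJ J_eq_zigzag_domain[OF k] \<open>x \<notin> zigzag_knots (step_len k) (real k * h) (route k)\<close> by auto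
  qed
  then obtain e a b where e: "e > 0" "\<forall>s. \<bar>s - x\<bar> < e \<longrightarrow> real k * h < s \<and> s < zigzag_end (step_len k) (real k * h) (route k) \<and> F_piece k s = a * s + b"
    using zigzag_locally_affine[OF pos_on_cells_route[OF k]] unfolding F_piece_def by blast
  show "\<exists>e>0. \<exists>a b. \<forall>y\<in>I01. \<bar>y - x\<bar> < e \<longrightarrow> F y = a * y + b"
  proof -
    have "\<forall>y\<in>I01. \<bar>y - x\<bar> < e \<longrightarrow> F y = a * y + b"
    proof (intro ballI impI)
      fix y assume "y \<in> I01" "\<bar>y - x\<bar> < e"
      hence "real k * h < y \<and> y < zigzag_end (step_len k) (real k * h) (route k) \<and> F_piece k y = a * y + b" using e by blast
      hence "y \<in> J k" "F_piece k y = a * y + b" using J_eq_zigzag_domain[OF k] by auto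
      then show "F y = a * y + b" using F_eq_F_piece[OF k] by simp
    qed
    then show ?thesis using e(1) by blast
  qed
qed

lemma emeasure_F_piece_vimage:
  assumes k: "k < n" and X: "X \<in> sets borel"
  shows "{x \<in> J k. F_piece k x \<in> X} \<in> sets borel \<and>
    emeasure lborel {x \<in> J k. F_piece k x \<in> X} = (\<Sum>j<n. ennreal (B k j) * emeasure lborel (X \<inter> J j))"
proof -
  have "{t \<in> {real k * h..zigzag_end (step_len k) (real k * h) (route k)}. F_piece k t \<in> X} \<in> sets borel \<and>
    emeasure lborel {t \<in> {real k * h..zigzag_end (step_len k) (real k * h) (route k)}. F_piece k t \<in> X} =
    sum_list (map (\<lambda>j. ennreal (step_len k j / h) * emeasure lborel (X \<inter> {real j * h .. real (j + 1) * h}))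
      (cells (route k)))"
    unfolding F_piece_def using emeasure_zigzag_vimage[OF pos_on_cells_route[OF k] _ h_pos X] route_props[OF k]
    by blast
  moreover have "(\<lambda>j. X \<inter> {real j * h .. real (j + 1) * h}) = (\<lambda>j. X \<inter> J j)" by (simp add: J_def)
  ultimately show ?thesis unfolding J_eq_zigzag_domain[OF k, symmetric] sum_list_cells_route[OF k] by metis
qed

lemma emeasure_F_vimage_H:
  assumes k: "k < n" and X: "X \<in> sets borel"
  shows "{x \<in> H k. F x \<in> X} \<in> sets borel \<and>
    emeasure lborel {x \<in> H k. F x \<in> X} = (\<Sum>j<n. ennreal (B k j) * emeasure lborel (X \<inter> J j))"
proof -
  have eq: "{x \<in> H k. F x \<in> X} = {x \<in> J k. F_piece k x \<in> X} \<inter> H k"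
    using F_eq_F_piece[OF k] H_subset_J[of k] by auto
  have "emeasure lborel ({x \<in> J k. F_piece k x \<in> X} \<inter> H k) = emeasure lborel {x \<in> J k. F_piece k x \<in> X}"
    by (rule emeasure_Int_eq_of_Diff_subset_singleton[where p = "real (Suc k) * h"])
      (use emeasure_F_piece_vimage[OF k X] J_Diff_H[OF k] in auto)
  moreover have "{x \<in> J k. F_piece k x \<in> X} \<inter> H k \<in> sets borel"
    using emeasure_F_piece_vimage[OF k X] by (intro sets.Int) auto
  ultimately show ?thesis using emeasure_F_piece_vimage[OF k X] unfolding eq by simp
qed

lemma emeasure_Int_J_eq_Int_H:
  assumes "j < n" "X \<in> sets borel"
  shows "emeasure lborel (X \<inter> J j) = emeasure lborel (X \<inter> H j)"
proof -
  have "emeasure lborel (X \<inter> J j \<inter> H j) = emeasure lborel (X \<inter> J j)"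
    by (rule emeasure_Int_eq_of_Diff_subset_singleton[where p = "real (Suc j) * h"])
      (use assms J_Diff_H[OF assms(1)] in auto)
  moreover have "X \<inter> J j \<inter> H j = X \<inter> H j" using H_subset_J by auto
  ultimately show ?thesis by simp
qed

lemma F_preserves:
  assumes X: "X \<in> sets borel" and "X \<subseteq> I01"
  shows "emeasure lborel {x \<in> I01. F x \<in> X} = emeasure lborel X"
proof -
  have "(\<lambda>k. {x \<in> H k. F x \<in> X}) ` {..<n} \<subseteq> sets lborel" using emeasure_F_vimage_H[OF _ X] by auto
  moreover have "disjoint_family_on (\<lambda>k. {x \<in> H k. F x \<in> X}) {..<n}"
    using H_disjoint by (auto simp: disjoint_family_on_def)
  moreover have "{x \<in> I01. F x \<in> X} = (\<Union>k<n. {x \<in> H k. F x \<in> X})"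
    using I01_eq_Union_H by auto
  ultimately have "emeasure lborel {x \<in> I01. F x \<in> X} = (\<Sum>k<n. emeasure lborel {x \<in> H k. F x \<in> X})"
    using sum_emeasure[of "\<lambda>k. {x \<in> H k. F x \<in> X}" "{..<n}" lborel] by simp
  also have "\<dots> = (\<Sum>k<n. \<Sum>j<n. ennreal (B k j) * emeasure lborel (X \<inter> J j))"
    using emeasure_F_vimage_H[OF _ X] by simp
  also have "\<dots> = (\<Sum>j<n. (\<Sum>k<n. ennreal (B k j)) * emeasure lborel (X \<inter> J j))"
    by (subst sum.swap) (simp add: sum_distrib_right)
  also have "\<dots> = (\<Sum>j<n. emeasure lborel (X \<inter> H j))"
  proof (rule sum.cong)
    fix j assume j: "j \<in> {..<n}"
    then have "(\<Sum>k<n. ennreal (B k j)) = 1"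
      using B_nonneg B_col_sum[of j] by (simp add: sum_ennreal)
    then show "(\<Sum>k<n. ennreal (B k j)) * emeasure lborel (X \<inter> J j) = emeasure lborel (X \<inter> H j)"
      using emeasure_Int_J_eq_Int_H[of j X] j X by simp
  qed simp
  also have "\<dots> = emeasure lborel (\<Union>j<n. X \<inter> H j)"
    using H_disjoint X by (intro sum_emeasure) (auto simp: disjoint_family_on_def)
  also have "(\<Union>j<n. X \<inter> H j) = X" using assms(2) I01_eq_Union_H by auto
  finally show ?thesis .
qed

lemma F_C_lambda: "F \<in> C_lambda"
  unfolding C_lambda_def using continuous_on_F F_I01 F_preserves by auto

lemma cell_between:
  assumes "a \<le> b" "real a * h \<le> v" "v \<le> real (Suc b) * h"
  shows "\<exists>j. a \<le> j \<and> j \<le> b \<and> v \<in> J j"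
  using assms
proof (induction b rule: dec_induct)
  case base
  then show ?case by (auto simp: J_def)
next
  case (step b)
  show ?case
  proof (cases "v \<le> real (Suc b) * h")
    case True
    then show ?thesis using step by force
  next
    case False
    then show ?thesis using step by (intro exI[of _ "Suc b"]) (auto simp: J_def)
  qed
qed

lemma F_close_to_f:
  assumes om: "\<And>x y. x \<in> I01 \<Longrightarrow> y \<in> I01 \<Longrightarrow> \<bar>x - y\<bar> \<le> h \<Longrightarrow> \<bar>f x - f y\<bar> \<le> \<omega>"
    and x: "x \<in> I01"
  shows "\<bar>F x - f x\<bar> \<le> 3 * h + \<omega>"
proof -
  define k where "k = cell_index x"
  have k: "k < n" by (simp add: k_def cell_index_less)
  have xJ: "x \<in> J k" using mem_J_cell_index[OF x] by (simp add: k_def)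
  have r: "real (P k) * h \<le> F x" "F x \<le> real (Suc (Q k)) * h" using F_range[OF k xJ] by auto
  obtain j where j: "P k \<le> j" "j \<le> Q k" "F x \<in> J j" using cell_between[OF _ r] P_Q_in_support[OF k] by auto
  have "B k j > 0" using B_pos_between[OF k j(1,2)] .
  then obtain j' where j': "j' < n" "A k j' > 0" "near j' j" using B_pos_iff by auto
  obtain y where y: "y \<in> H k" "f y \<in> H j'" using A_pos_witness[OF k j'(2)] by auto
  have yJ: "y \<in> J k" "f y \<in> J j'" using y H_subset_J by auto
  have "\<bar>F x - f y\<bar> \<le> 3 * h"
  proof -
    have "real j \<le> real j' + 2" "real j' \<le> real j + 2" using j'(3) by (auto simp: near_def)
    hence "real j * h \<le> (real j' + 2) * h" "real j' * h \<le> (real j + 2) * h"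
      using h_pos by (auto intro: mult_right_mono)
    then show ?thesis using j(3) yJ(2) by (auto simp: J_def algebra_simps abs_le_iff)
  qed
  moreover have "\<bar>f x - f y\<bar> \<le> \<omega>"
  proof (rule om[OF x])
    show "y \<in> I01" using yJ J_subset_I01[OF k] by auto
    show "\<bar>x - y\<bar> \<le> h" using xJ yJ by (auto simp: J_def algebra_simps abs_le_iff)
  qed
  ultimately show ?thesis by linarith
qed

lemma rho_f_F_le:
  assumes "\<And>x y. x \<in> I01 \<Longrightarrow> y \<in> I01 \<Longrightarrow> \<bar>x - y\<bar> \<le> h \<Longrightarrow> \<bar>f x - f y\<bar> \<le> \<omega>"
  shows "rho f F \<le> 3 * h + \<omega>"
  using F_close_to_f[OF assms] by (intro rho_le) (simp add: abs_minus_commute)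

end

section \<open>Shadowing pseudo orbits of perturbations\<close>

locale perturbation = grid_approx +
  fixes g :: "real \<Rightarrow> real" and \<zeta> \<eta> \<delta> :: real
  assumes F_modulus: "\<forall>s\<in>I01. \<forall>t\<in>I01. \<bar>s - t\<bar> < \<zeta> \<longrightarrow> \<bar>F s - F t\<bar> < h / 2"
    and eta: "0 < \<eta>" "\<eta> < \<zeta>" "\<eta> \<le> h / 4"
    and delta: "0 < \<delta>" "2 * \<delta> \<le> \<eta>"
    and g_cont: "continuous_on I01 g" and g_I01: "g ` I01 \<subseteq> I01"
    and g_close: "\<forall>x\<in>I01. \<bar>F x - g x\<bar> < \<delta>"
begin

definition core_lo :: "nat \<Rightarrow> real" where "core_lo j = real j * h + \<eta>"
definition core_hi :: "nat \<Rightarrow> real" where "core_hi j = real (Suc j) * h - \<eta>"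

lemma core_lo_le_hi: "core_lo j \<le> core_hi j"
  using eta h_pos by (simp add: core_lo_def core_hi_def algebra_simps)

lemma core_subset_J: "{core_lo j..core_hi j} \<subseteq> J j"
  using eta by (auto simp: core_lo_def core_hi_def J_def)

lemma core_subset_I01: "j < n \<Longrightarrow> {core_lo j..core_hi j} \<subseteq> I01"
  using core_subset_J J_subset_I01 by blast

lemma F_far_from_ends_in_core:
  assumes k: "k < n" and u: "u \<in> J k" "h \<le> \<bar>F u - F (real k * h)\<bar>" "h \<le> \<bar>F u - F (real (Suc k) * h)\<bar>"
  shows "u \<in> {core_lo k..core_hi k}"
proof -
  have ends: "real k * h \<in> I01" "real (Suc k) * h \<in> I01"
    using k grid_point_I01[of k] grid_point_I01[of "Suc k"] by auto
  have uI: "u \<in> I01" using u(1) J_subset_I01[OF k] by auto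
  have "\<not> u < real k * h + \<eta>"
  proof
    assume "u < real k * h + \<eta>"
    then have "\<bar>u - real k * h\<bar> < \<zeta>" using u(1) eta by (auto simp: J_def)
    then have "\<bar>F u - F (real k * h)\<bar> < h / 2" using F_modulus uI ends by blast
    then show False using u(2) h_pos by linarith
  qed
  moreover have "\<not> u > real (Suc k) * h - \<eta>"
  proof
    assume "u > real (Suc k) * h - \<eta>"
    then have "\<bar>u - real (Suc k) * h\<bar> < \<zeta>" using u(1) eta by (auto simp: J_def)
    then have "\<bar>F u - F (real (Suc k) * h)\<bar> < h / 2" using F_modulus uI ends by blast
    then show False using u(3) h_pos by linarith
  qed
  ultimately show ?thesis by (auto simp: core_lo_def core_hi_def)
qed

lemma core_attains_P_Q:
  assumes k: "k < n"
  obtains u1 u2 where "u1 \<in> {core_lo k..core_hi k}" "F u1 = real (P k) * h"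
    "u2 \<in> {core_lo k..core_hi k}" "F u2 = real (Suc (Q k)) * h"
proof -
  obtain u1 u2 where u: "u1 \<in> J k" "F u1 = real (P k) * h" "u2 \<in> J k" "F u2 = real (Suc (Q k)) * h"
    using F_attains_P_Q[OF k] by metis
  have ends: "F (real k * h) = real (anchor k) * h" "F (real (Suc k) * h) = real (anchor (Suc k)) * h"
    using k F_grid_point[of k] F_grid_point[of "Suc k"] by auto
  have margins: "real (P k) * h + h \<le> real (anchor k) * h" "real (anchor k) * h + h \<le> real (Suc (Q k)) * h"
    "real (P k) * h + h \<le> real (anchor (Suc k)) * h" "real (anchor (Suc k)) * h + h \<le> real (Suc (Q k)) * h"
    using anchor_margin[OF k, of k] anchor_margin[OF k, of "Suc k"] by auto
  have "u1 \<in> {core_lo k..core_hi k}"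
    by (rule F_far_from_ends_in_core[OF k u(1)]) (use u(2) ends margins in linarith)+
  moreover have "u2 \<in> {core_lo k..core_hi k}"
    by (rule F_far_from_ends_in_core[OF k u(3)]) (use u(4) ends margins in linarith)+
  ultimately show thesis using that u by blast
qed

text \<open>Inside the core of \<open>J k\<close>, \<open>F\<close> reaches both heights \<open>P k * h\<close> and \<open>(Q k + 1) * h\<close>; perturbing
  these two values by less than \<open>\<delta>\<close> keeps every core of the row support between them.\<close>
lemma core_cover:
  assumes k: "k < n" and j: "P k \<le> j" "j \<le> Q k"
  shows "{core_lo j..core_hi j} \<subseteq> g ` {core_lo k..core_hi k}"
proof
  fix y assume y: "y \<in> {core_lo j..core_hi j}"
  obtain u1 u2 where u: "u1 \<in> {core_lo k..core_hi k}" "F u1 = real (P k) * h"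
      "u2 \<in> {core_lo k..core_hi k}" "F u2 = real (Suc (Q k)) * h"
    using core_attains_P_Q[OF k] .
  have core_I01: "{core_lo k..core_hi k} \<subseteq> I01" using core_subset_I01[OF k] .
  have "real (P k) * h \<le> real j * h" "real (Suc j) * h \<le> real (Suc (Q k)) * h"
    using j by (auto intro: mult_h_mono)
  moreover have "\<bar>F u1 - g u1\<bar> < \<delta>" "\<bar>F u2 - g u2\<bar> < \<delta>" using g_close u core_I01 by blast+
  moreover have "real j * h + \<eta> \<le> y" "y \<le> real (Suc j) * h - \<eta>"
    using y by (auto simp: core_lo_def core_hi_def)
  ultimately have between: "g u1 \<le> y" "y \<le> g u2"
    using u(2,4) delta by linarith+
  have "{min u1 u2..max u1 u2} \<subseteq> {core_lo k..core_hi k}" using u by auto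
  then have "continuous_on {min u1 u2..max u1 u2} g"
    using core_I01 g_cont by (meson continuous_on_subset order_trans)
  then obtain s where "min u1 u2 \<le> s" "s \<le> max u1 u2" "g s = y"
    using IVT'[of g u1 y u2] IVT2'[of g u1 y u2] between by (cases "u1 \<le> u2") (auto simp: min_def max_def)
  then show "y \<in> g ` {core_lo k..core_hi k}" using u by force
qed

lemma near_F_range:
  assumes k: "k < n" and x: "x \<in> I01" and t: "t \<in> J k" "\<bar>x - t\<bar> < 2 * \<delta>"
    and x': "\<bar>g x - x'\<bar> < \<delta>"
  shows "\<exists>v. real (P k) * h \<le> v \<and> v \<le> real (Suc (Q k)) * h \<and> \<bar>x' - v\<bar> < 2 * \<delta>"
proof -
  have \<delta>: "0 < \<delta>" "2 * \<delta> < \<zeta>" "\<delta> \<le> h / 8" using delta eta by auto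
  have Fx: "\<bar>x' - F x\<bar> < 2 * \<delta>" using g_close x x' by force
  \<comment> \<open>outside \<open>J k\<close>, \<open>x\<close> is close to an end point of \<open>J k\<close>, where \<open>F\<close> takes an anchor value\<close>
  have near_end: "\<exists>v. real (P k) * h \<le> v \<and> v \<le> real (Suc (Q k)) * h \<and> \<bar>x' - v\<bar> < 2 * \<delta>"
    if k': "k' = k \<or> k' = Suc k" and close: "\<bar>x - real k' * h\<bar> < 2 * \<delta>" for k'
  proof -
    have "k' \<le> n" using k k' by auto
    then have "real k' * h \<in> I01" by (rule grid_point_I01)
    then have "\<bar>F x - F (real k' * h)\<bar> < h / 2" using F_modulus x close \<delta> by force
    moreover have "F (real k' * h) = real (anchor k') * h" using \<open>k' \<le> n\<close> by (rule F_grid_point)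
    ultimately have "\<bar>x' - real (anchor k') * h\<bar> < h" using Fx \<delta> by linarith
    then show ?thesis using anchor_margin[OF k k'] \<delta> by (intro exI[of _ x']) auto
  qed
  consider "x \<in> J k" | "\<bar>x - real k * h\<bar> < 2 * \<delta>" | "\<bar>x - real (Suc k) * h\<bar> < 2 * \<delta>"
    using t by (fastforce simp: J_def)
  then show ?thesis
  proof cases
    case 1
    then show ?thesis using F_range[OF k] Fx by blast
  qed (use near_end in blast)+
qed

definition next_cell :: "nat \<Rightarrow> real \<Rightarrow> nat" where
  "next_cell k x = (SOME j. P k \<le> j \<and> j \<le> Q k \<and> (\<exists>t\<in>J j. \<bar>x - t\<bar> < 2 * \<delta>))"

lemma next_cell_near:
  assumes "k < n" "x \<in> I01" "t \<in> J k" "\<bar>x - t\<bar> < 2 * \<delta>" "\<bar>g x - x'\<bar> < \<delta>"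
  shows "P k \<le> next_cell k x' \<and> next_cell k x' \<le> Q k \<and> (\<exists>t'\<in>J (next_cell k x'). \<bar>x' - t'\<bar> < 2 * \<delta>)"
proof -
  obtain v where v: "real (P k) * h \<le> v" "v \<le> real (Suc (Q k)) * h" "\<bar>x' - v\<bar> < 2 * \<delta>"
    using near_F_range[OF assms] by blast
  obtain j where "P k \<le> j" "j \<le> Q k" "v \<in> J j"
    using cell_between[OF _ v(1,2)] P_Q_in_support[OF assms(1)] by auto
  then have "\<exists>j. P k \<le> j \<and> j \<le> Q k \<and> (\<exists>t'\<in>J j. \<bar>x' - t'\<bar> < 2 * \<delta>)" using v(3) by blast
  then show ?thesis unfolding next_cell_def by (rule someI_ex)
qed

text \<open>Each cell of the itinerary depends only on the previous cell and the current point, so the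
  itinerary of a periodic pseudo orbit is eventually periodic.\<close>
definition itinerary :: "(nat \<Rightarrow> real) \<Rightarrow> nat \<Rightarrow> nat" where
  "itinerary xs = rec_nat (cell_index (xs 0)) (\<lambda>i k. next_cell k (xs (Suc i)))"

lemma itinerary_0: "itinerary xs 0 = cell_index (xs 0)"
  by (simp add: itinerary_def)

lemma itinerary_Suc: "itinerary xs (Suc i) = next_cell (itinerary xs i) (xs (Suc i))"
  by (simp add: itinerary_def)

lemma itinerary_near:
  assumes po: "pseudo_orbit g \<delta> xs"
  shows "itinerary xs i < n \<and> (\<exists>t\<in>J (itinerary xs i). \<bar>xs i - t\<bar> < 2 * \<delta>)"
proof (induction i)
  case 0
  have "xs 0 \<in> J (itinerary xs 0)" using mem_J_cell_index po by (simp add: itinerary_0 pseudo_orbit_def)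
  then show ?case using delta cell_index_less by (auto simp: itinerary_0 intro!: bexI[of _ "xs 0"])
next
  case (Suc i)
  then obtain t where "t \<in> J (itinerary xs i)" "\<bar>xs i - t\<bar> < 2 * \<delta>" by blast
  moreover have "xs i \<in> I01" "\<bar>g (xs i) - xs (Suc i)\<bar> < \<delta>" using po by (auto simp: pseudo_orbit_def)
  ultimately have "itinerary xs (Suc i) \<le> Q (itinerary xs i)"
      "\<exists>t\<in>J (itinerary xs (Suc i)). \<bar>xs (Suc i) - t\<bar> < 2 * \<delta>"
    using next_cell_near Suc by (auto simp: itinerary_Suc)
  moreover have "Q (itinerary xs i) < n" using P_Q_in_support Suc by blast
  ultimately show ?case by auto
qed

lemma itinerary_step:
  assumes po: "pseudo_orbit g \<delta> xs"
  shows "P (itinerary xs i) \<le> itinerary xs (Suc i) \<and> itinerary xs (Suc i) \<le> Q (itinerary xs i)"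
proof -
  obtain t where "t \<in> J (itinerary xs i)" "\<bar>xs i - t\<bar> < 2 * \<delta>" using itinerary_near[OF po] by blast
  moreover have "xs i \<in> I01" "\<bar>g (xs i) - xs (Suc i)\<bar> < \<delta>" using po by (auto simp: pseudo_orbit_def)
  ultimately show ?thesis using next_cell_near itinerary_near[OF po] by (auto simp: itinerary_Suc)
qed

lemma core_itinerary_cover:
  assumes po: "pseudo_orbit g \<delta> xs"
  shows "{core_lo (itinerary xs (Suc i))..core_hi (itinerary xs (Suc i))}
    \<subseteq> g ` {core_lo (itinerary xs i)..core_hi (itinerary xs i)}"
  using core_cover itinerary_near[OF po] itinerary_step[OF po] by blast

lemma core_itinerary_close:
  assumes po: "pseudo_orbit g \<delta> xs" and w: "w \<in> {core_lo (itinerary xs i)..core_hi (itinerary xs i)}"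
  shows "\<bar>w - xs i\<bar> < h + 2 * \<delta>"
proof -
  obtain t where t: "t \<in> J (itinerary xs i)" "\<bar>xs i - t\<bar> < 2 * \<delta>" using itinerary_near[OF po] by blast
  moreover have "w \<in> J (itinerary xs i)" using w core_subset_J by blast
  ultimately have "\<bar>w - t\<bar> \<le> h" by (auto simp: J_def algebra_simps abs_le_iff)
  then show ?thesis using t(2) by linarith
qed

lemma core_itinerary_I01:
  assumes po: "pseudo_orbit g \<delta> xs"
  shows "{core_lo (itinerary xs i)..core_hi (itinerary xs i)} \<subseteq> I01"
  using core_subset_I01 itinerary_near[OF po] by blast

lemma pseudo_orbit_traced:
  assumes po: "pseudo_orbit g \<delta> xs"
  shows "\<exists>z\<in>I01. \<forall>i. \<bar>(g ^^ i) z - xs i\<bar> < h + 2 * \<delta>"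
proof -
  obtain z where "z \<in> {core_lo (itinerary xs 0)..core_hi (itinerary xs 0)}"
      "\<forall>i. (g ^^ i) z \<in> {core_lo (itinerary xs i)..core_hi (itinerary xs i)}"
    using covering_chain_orbit[where a = "\<lambda>i. core_lo (itinerary xs i)" and b = "\<lambda>i. core_hi (itinerary xs i)",
        OF g_cont g_I01 core_lo_le_hi core_itinerary_I01[OF po]
        core_itinerary_cover[OF po]] by blast
  then show ?thesis using core_itinerary_I01[OF po] core_itinerary_close[OF po] by blast
qed

lemma pseudo_orbit_traced_periodic:
  assumes po: "pseudo_orbit g \<delta> xs" and per: "periodic_seq xs"
  shows "\<exists>z\<in>I01. periodic_point g z \<and> (\<forall>i. \<bar>(g ^^ i) z - xs i\<bar> < h + 2 * \<delta>)"
proof -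
  obtain N where N: "N \<ge> 1" "\<And>i. xs (i + N) = xs i" using per by (auto simp: periodic_seq_def)
  have "itinerary xs i \<in> {..<n}" for i using itinerary_near[OF po] by blast
  then obtain i0 M where i0: "N dvd i0" and M: "M \<ge> 1"
      and itin_per: "\<forall>j. itinerary xs (i0 + M + j) = itinerary xs (i0 + j)"
    using driven_seq_eventually_periodic[where ks = "itinerary xs" and \<phi> = next_cell and xs = xs,
        OF finite_lessThan _ itinerary_Suc N] by blast
  obtain z where z: "z \<in> I01" "(g ^^ M) z = z"
      "\<forall>i. (g ^^ i) z \<in> {core_lo (itinerary xs (M * i0 + i))..core_hi (itinerary xs (M * i0 + i))}"
    using covering_chain_periodic_orbit[where a = "\<lambda>i. core_lo (itinerary xs i)" and b = "\<lambda>i. core_hi (itinerary xs i)",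
        OF g_cont g_I01 core_lo_le_hi core_itinerary_I01[OF po]
        core_itinerary_cover[OF po] M] itin_per by metis
  obtain r where "i0 = N * r" using i0 by (auto elim: dvdE)
  then have "xs (M * i0 + i) = xs i" for i
    using periodic_add_mult[of xs N i "M * r", OF N(2)] by (simp add: algebra_simps)
  then have "\<bar>(g ^^ i) z - xs i\<bar> < h + 2 * \<delta>" for i
    using core_itinerary_close[OF po, of "(g ^^ i) z" "M * i0 + i"] z(3) by metis
  moreover have "periodic_point g z" using z(2) M by (auto simp: periodic_point_def)
  ultimately show ?thesis using z(1) by blast
qed

end

lemma (in grid_approx) shadowing:
  assumes \<epsilon>: "0 < \<epsilon>" "h \<le> \<epsilon> / 2"
  shows "\<exists>\<delta>>0. \<delta> < \<epsilon> / 2 \<and> (\<forall>g\<in>C_lambda. rho F g < \<delta> \<longrightarrow>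
            (\<forall>xs. pseudo_orbit g \<delta> xs \<longrightarrow>
               (\<exists>z\<in>I01. traces g \<epsilon> z xs) \<and>
               (periodic_seq xs \<longrightarrow> (\<exists>z\<in>I01. traces g \<epsilon> z xs \<and> periodic_point g z))))"
proof -
  have "uniformly_continuous_on I01 F"
    using continuous_on_F by (intro compact_uniformly_continuous) (auto simp: I01_def)
  moreover have "h / 2 > 0" using h_pos by simp
  ultimately obtain \<zeta> where \<zeta>: "\<zeta> > 0" "\<forall>s\<in>I01. \<forall>t\<in>I01. dist t s < \<zeta> \<longrightarrow> dist (F t) (F s) < h / 2"
    unfolding uniformly_continuous_on_def by blast
  have F_modulus: "\<forall>s\<in>I01. \<forall>t\<in>I01. \<bar>s - t\<bar> < \<zeta> \<longrightarrow> \<bar>F s - F t\<bar> < h / 2"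
    using \<zeta>(2) by (simp add: dist_real_def)
  define \<eta> where "\<eta> = min (\<zeta> / 2) (h / 4)"
  define \<delta> where "\<delta> = min (\<eta> / 2) (\<epsilon> / 4)"
  have \<eta>\<delta>: "0 < \<eta>" "\<eta> < \<zeta>" "\<eta> \<le> h / 4" "0 < \<delta>" "2 * \<delta> \<le> \<eta>" "\<delta> \<le> \<epsilon> / 4"
    using \<zeta>(1) h_pos \<epsilon> by (auto simp: \<eta>_def \<delta>_def)
  have "(\<exists>z\<in>I01. traces g \<epsilon> z xs) \<and> (periodic_seq xs \<longrightarrow> (\<exists>z\<in>I01. traces g \<epsilon> z xs \<and> periodic_point g z))"
    if g: "g \<in> C_lambda" "rho F g < \<delta>" and po: "pseudo_orbit g \<delta> xs" for g xs
  proof -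
    have g_I01: "g ` I01 \<subseteq> I01" and g_cont: "continuous_on I01 g" using g(1) by (auto simp: C_lambda_def)
    have "F ` I01 \<subseteq> I01" using F_I01 by blast
    then have "\<bar>F x - g x\<bar> < \<delta>" if "x \<in> I01" for x
      using abs_diff_le_rho[of F g x] g_I01 g(2) that by linarith
    then interpret perturbation f n g \<zeta> \<eta> \<delta>
      using F_modulus \<eta>\<delta> g_I01 g_cont f_C n_ge_2 by unfold_locales auto
    have "h + 2 * \<delta> \<le> \<epsilon>" using \<epsilon> \<eta>\<delta> by simp
    then have "traces g \<epsilon> z xs" if "\<forall>i. \<bar>(g ^^ i) z - xs i\<bar> < h + 2 * \<delta>" for z
      using that unfolding traces_def by (meson less_le_trans)
    then show ?thesis using pseudo_orbit_traced[OF po] pseudo_orbit_traced_periodic[OF po] by blast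
  qed
  moreover have "0 < \<delta>" "\<delta> < \<epsilon> / 2" using \<eta>\<delta> \<epsilon> by auto
  ultimately show ?thesis by blast
qed

theorem mainTheorem8:
  fixes \<epsilon> :: real and f :: "real \<Rightarrow> real"
  assumes "\<epsilon> > 0" and "f \<in> C_lambda"
  shows "\<exists>\<delta> F. 0 < \<delta> \<and> \<delta> < \<epsilon> / 2 \<and> F \<in> C_lambda \<and>
           piecewise_affine F \<and> rho f F < \<epsilon> / 2 \<and>
           (\<forall>g \<in> C_lambda. rho F g < \<delta> \<longrightarrow>
              (\<forall>xs. pseudo_orbit g \<delta> xs \<longrightarrow>
                 (\<exists>z \<in> I01. traces g \<epsilon> z xs) \<and>
                 (periodic_seq xs \<longrightarrow> (\<exists>z \<in> I01. traces g \<epsilon> z xs \<and> periodic_point g z))))"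
proof -
  have "uniformly_continuous_on I01 f"
    using assms(2) by (intro compact_uniformly_continuous) (auto simp: C_lambda_def I01_def)
  moreover have "0 < \<epsilon> / 16" "0 < \<epsilon> / 8" using assms(1) by auto
  ultimately obtain n :: nat where n: "n \<ge> 2" "1 / real n \<le> \<epsilon> / 16"
      and modulus: "\<And>x y. x \<in> I01 \<Longrightarrow> y \<in> I01 \<Longrightarrow> \<bar>x - y\<bar> \<le> 1 / real n \<Longrightarrow> \<bar>f x - f y\<bar> \<le> \<epsilon> / 8"
    using exists_fine_grid by blast
  interpret grid_approx f n using assms(2) n(1) by unfold_locales
  have "rho f F \<le> 3 * h + \<epsilon> / 8" by (rule rho_f_F_le) (use modulus in \<open>simp add: h_def\<close>)
  then have "rho f F < \<epsilon> / 2" using n(2) assms(1) unfolding h_def by linarith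
  moreover have "h \<le> \<epsilon> / 2" using n(2) assms(1) unfolding h_def by linarith
  then obtain \<delta> where "\<delta> > 0" "\<delta> < \<epsilon> / 2" "\<forall>g\<in>C_lambda. rho F g < \<delta> \<longrightarrow>
      (\<forall>xs. pseudo_orbit g \<delta> xs \<longrightarrow> (\<exists>z\<in>I01. traces g \<epsilon> z xs) \<and>
        (periodic_seq xs \<longrightarrow> (\<exists>z\<in>I01. traces g \<epsilon> z xs \<and> periodic_point g z)))"
    using shadowing[OF assms(1)] by blast
  ultimately show ?thesis using F_C_lambda piecewise_affine_F by blast
qed

end
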